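(* Let $\mathcal C,\mathcal D$ be 2-categories. Let $L:\mathcal C\boxtimes_{\mathrm{sim}}\mathcal D\to\mathcal C\times\mathcal D$ be the strict 2-functor with $L(C;D)=(C,D)$, $L(n,p,r;m,q,s)=(\circ p,\circ q)$ (the composites $(p)_n\circ\dots\circ(p)_1$ and $(q)_m\circ\dots\circ(q)_1$), and $L(\xi,\alpha;\rho,\beta)=(\alpha_{\bar n}\circ\dots\circ\alpha_1,\ \beta_{\bar m}\circ\dots\circ\beta_1)$. Let $R:\mathcal C\times\mathcal D\to\mathcal C\boxtimes_{\mathrm{sim}}\mathcal D$ be the lax functor with $R(C,D)=(C;D)$, $R(c,d)=$ the 1-cell "first $d$, then $c$", i.e. $(1,(c),r_0;1,(d),s_0)$ with $r_0=(0,0,1)$, $s_0=(0,1,1)$ as maps $[2]\to[1]$, $R(\gamma,\delta)=(\mathrm{id}_{[1]},(\gamma);\mathrm{id}_{[1]},(\delta))$, unit comparison at $(C,D)$ the unique 2-cell from the identity to $R(1_C,1_D)$ with identity icon components, and composition comparison $R(c',d')\circ R(c,d)\Rightarrow R(c'\circ c,d'\circ d)$ the 2-cell $(\partial,(1_{c'\circ c});\partial,(1_{d'\circ d}))$ with $\partial:[1]\to[2]$, $0\mapsto0$, $1\mapsto2$. Then $L\circ R=1_{\mathcal C\times\mathcal D}$, and the family of 2-cells $\eta_{(n,p,r;m,q,s)}=(!_{[1]\to[n]},(1_{\circ p});!_{[1]\to[m]},(1_{\circ q})):(n,p,r;m,q,s)\Rightarrow R L(n,p,r;m,q,s)$ (where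 $!_{[1]\to[k]}$ sends $0\mapsto0$, $1\mapsto k$) is an icon $\eta:1\Rightarrow R\circ L$ exhibiting $L\dashv R$ (with identity counit) in the 2-category of 2-categories, lax functors and icons.
   Context: All 2-categories are strict and small. An icon between lax functors $F,G:\mathcal X\to\mathcal Y$ that agree on objects is a family of 2-cells $\theta_x:Fx\Rightarrow Gx$, one for each 1-cell $x$, natural in 2-cells of $\mathcal X$ and compatible with the unit and composition comparisons; 2-categories, lax functors and icons form a 2-category. $[n]=\{0<\dots<n\}$ as a category; $\Delta_{\bot\top}$ has objects $[n]$ and morphisms order-preserving maps preserving first and last element. A path of length $n$ in $\mathcal C$ is a 2-functor $p:[n]\to\mathcal C$, with components $(p)_i=p(i-1\to i)$. For $\xi:[\bar n]\to[n]$ in $\Delta_{\bot\top}$, an icon $\alpha:p\circ\xi\Rightarrow\bar p$ is a family of 2-cells $\alpha_i:(p)_{\xi(i)}\circ\dots\circ(p)_{\xi(i-1)+1}\Rightarrow(\bar p)_i$, $i=1..\bar n$ (source an identity if $\xi(i-1)=\xi(i)$). A shuffle of $n,m$ is a pair $r:[n+m]\to[n]$, $s:[n+m]\to[m]$ in $\Delta_{\bot\top}$ such that at each step exactly one of $r,s$ increases by $1$ and the other stays constant. $\mathcal C\boxtimes_{\mathrm{sim}}\mathcal D$: objects pairs $(C;D)$; 1-cells sextuples $(n,p,r;m,q,s)$ with $p$ a path of length $n$ in $\mathcal C$, $q$ a path of length $m$ in $\mathcal D$, $(r,s)$ a shuffle, composed by concatenation (identity: $(0,C,\mathrm{id};0,D,\mathrm{id})$);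 2-cells $(n,p,r;m,q,s)\Rightarrow(\bar n,\bar p,\bar r;\bar m,\bar q,\bar s)$ are $(\xi,\alpha;\rho,\beta)$ with $\xi:[\bar n]\to[n]$, $\rho:[\bar m]\to[m]$ in $\Delta_{\bot\top}$ satisfying $\min r^{-1}(\xi(\bar r(\bar i)))\le\max s^{-1}(\rho(\bar s(\bar i)))$ for all $\bar i\in\{0,\dots,\bar n+\bar m\}$, and icons $\alpha:p\circ\xi\Rightarrow\bar p$, $\beta:q\circ\rho\Rightarrow\bar q$; vertical composite of $(\xi,\alpha;\rho,\beta)$ then $(\bar\xi,\bar\alpha;\bar\rho,\bar\beta)$ is $(\xi\circ\bar\xi,\bar\alpha\bullet(\alpha\bar\xi);\rho\circ\bar\rho,\bar\beta\bullet(\beta\bar\rho))$ with $(\alpha\bar\xi)_i=\alpha_{\bar\xi(i)}\circ\dots\circ\alpha_{\bar\xi(i-1)+1}$; horizontal composition is concatenation. *)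

theory Defs
  imports Main
begin

text \<open>Conventions: cmp g f is the composite "first f then g";
  vc b a is the vertical composite "first a then b";
  hc b a is the horizontal composite "first a then b" (a, b horizontally composable).\<close>

record ('o,'a,'b) tcat =
  Ob   :: "'o set"
  Ar   :: "'a set"
  dom1 :: "'a \<Rightarrow> 'o"
  cod1 :: "'a \<Rightarrow> 'o"
  idn  :: "'o \<Rightarrow> 'a"
  cmp  :: "'a \<Rightarrow> 'a \<Rightarrow> 'a"
  Cl   :: "'b set"
  src2 :: "'b \<Rightarrow> 'a"
  tgt2 :: "'b \<Rightarrow> 'a"
  id2  :: "'a \<Rightarrow> 'b"
  vc   :: "'b \<Rightarrow> 'b \<Rightarrow> 'b"
  hc   :: "'b \<Rightarrow> 'b \<Rightarrow> 'b"

definition twocat :: "('o,'a,'b) tcat \<Rightarrow> bool" where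
  "twocat C \<longleftrightarrow>
    (\<forall>f\<in>Ar C. dom1 C f \<in> Ob C \<and> cod1 C f \<in> Ob C) \<and>
    (\<forall>x\<in>Ob C. idn C x \<in> Ar C \<and> dom1 C (idn C x) = x \<and> cod1 C (idn C x) = x) \<and>
    (\<forall>f\<in>Ar C. \<forall>g\<in>Ar C. cod1 C f = dom1 C g \<longrightarrow>
        cmp C g f \<in> Ar C \<and> dom1 C (cmp C g f) = dom1 C f \<and> cod1 C (cmp C g f) = cod1 C g) \<and>
    (\<forall>f\<in>Ar C. cmp C f (idn C (dom1 C f)) = f \<and> cmp C (idn C (cod1 C f)) f = f) \<and>
    (\<forall>f\<in>Ar C. \<forall>g\<in>Ar C. \<forall>h\<in>Ar C. cod1 C f = dom1 C g \<longrightarrow> cod1 C g = dom1 C h \<longrightarrow>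
        cmp C h (cmp C g f) = cmp C (cmp C h g) f) \<and>
    (\<forall>a\<in>Cl C. src2 C a \<in> Ar C \<and> tgt2 C a \<in> Ar C \<and>
        dom1 C (src2 C a) = dom1 C (tgt2 C a) \<and> cod1 C (src2 C a) = cod1 C (tgt2 C a)) \<and>
    (\<forall>f\<in>Ar C. id2 C f \<in> Cl C \<and> src2 C (id2 C f) = f \<and> tgt2 C (id2 C f) = f) \<and>
    (\<forall>a\<in>Cl C. \<forall>b\<in>Cl C. tgt2 C a = src2 C b \<longrightarrow>
        vc C b a \<in> Cl C \<and> src2 C (vc C b a) = src2 C a \<and> tgt2 C (vc C b a) = tgt2 C b) \<and>
    (\<forall>a\<in>Cl C. vc C a (id2 C (src2 C a)) = a \<and> vc C (id2 C (tgt2 C a)) a = a) \<and>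
    (\<forall>a\<in>Cl C. \<forall>b\<in>Cl C. \<forall>c\<in>Cl C. tgt2 C a = src2 C b \<longrightarrow> tgt2 C b = src2 C c \<longrightarrow>
        vc C c (vc C b a) = vc C (vc C c b) a) \<and>
    (\<forall>a\<in>Cl C. \<forall>b\<in>Cl C. cod1 C (src2 C a) = dom1 C (src2 C b) \<longrightarrow>
        hc C b a \<in> Cl C \<and> src2 C (hc C b a) = cmp C (src2 C b) (src2 C a) \<and>
        tgt2 C (hc C b a) = cmp C (tgt2 C b) (tgt2 C a)) \<and>
    (\<forall>a\<in>Cl C. hc C a (id2 C (idn C (dom1 C (src2 C a)))) = a \<and>
        hc C (id2 C (idn C (cod1 C (src2 C a)))) a = a) \<and>
    (\<forall>a\<in>Cl C. \<forall>b\<in>Cl C. \<forall>c\<in>Cl C. cod1 C (src2 C a) = dom1 C (src2 C b) \<longrightarrow>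
        cod1 C (src2 C b) = dom1 C (src2 C c) \<longrightarrow> hc C c (hc C b a) = hc C (hc C c b) a) \<and>
    (\<forall>f\<in>Ar C. \<forall>g\<in>Ar C. cod1 C f = dom1 C g \<longrightarrow>
        id2 C (cmp C g f) = hc C (id2 C g) (id2 C f)) \<and>
    (\<forall>a\<in>Cl C. \<forall>a'\<in>Cl C. \<forall>b\<in>Cl C. \<forall>b'\<in>Cl C.
        tgt2 C a = src2 C a' \<longrightarrow> tgt2 C b = src2 C b' \<longrightarrow> cod1 C (src2 C a) = dom1 C (src2 C b) \<longrightarrow>
        hc C (vc C b' b) (vc C a' a) = vc C (hc C b' a') (hc C b a))"

definition prodcat :: "('o1,'a1,'b1) tcat \<Rightarrow> ('o2,'a2,'b2) tcat \<Rightarrow>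
    ('o1 \<times> 'o2, 'a1 \<times> 'a2, 'b1 \<times> 'b2) tcat" where
  "prodcat C D = \<lparr> Ob = Ob C \<times> Ob D, Ar = Ar C \<times> Ar D,
     dom1 = (\<lambda>(c,d). (dom1 C c, dom1 D d)), cod1 = (\<lambda>(c,d). (cod1 C c, cod1 D d)),
     idn = (\<lambda>(x,y). (idn C x, idn D y)),
     cmp = (\<lambda>(c',d') (c,d). (cmp C c' c, cmp D d' d)),
     Cl = Cl C \<times> Cl D,
     src2 = (\<lambda>(a,b). (src2 C a, src2 D b)), tgt2 = (\<lambda>(a,b). (tgt2 C a, tgt2 D b)),
     id2 = (\<lambda>(c,d). (id2 C c, id2 D d)),
     vc = (\<lambda>(a',b') (a,b). (vc C a' a, vc D b' b)),
     hc = (\<lambda>(a',b') (a,b). (hc C a' a, hc D b' b)) \<rparr>"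

text \<open>A path of length n in C (a 2-functor [n] \<rightarrow> C) is represented by its starting
  object together with the list of its n components (p)_1, ..., (p)_n.\<close>

type_synonym ('o,'a) path = "'o \<times> 'a list"

definition is_path :: "('o,'a,'b) tcat \<Rightarrow> nat \<Rightarrow> ('o,'a) path \<Rightarrow> bool" where
  "is_path C n p \<longleftrightarrow> fst p \<in> Ob C \<and> length (snd p) = n \<and> set (snd p) \<subseteq> Ar C \<and>
     (0 < n \<longrightarrow> dom1 C (snd p ! 0) = fst p) \<and>
     (\<forall>i. Suc i < n \<longrightarrow> cod1 C (snd p ! i) = dom1 C (snd p ! Suc i))"

definition pobj :: "('o,'a,'b) tcat \<Rightarrow> ('o,'a) path \<Rightarrow> nat \<Rightarrow> 'o" where
  "pobj C p j = (if j = 0 then fst p else cod1 C (snd p ! (j - 1)))"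

text \<open>The composite (p)_k o ... o (p)_(j+1) (the identity at p(j) if j = k).\<close>
definition pseg :: "('o,'a,'b) tcat \<Rightarrow> ('o,'a) path \<Rightarrow> nat \<Rightarrow> nat \<Rightarrow> 'a" where
  "pseg C p j k = foldl (\<lambda>acc f. cmp C f acc) (idn C (pobj C p j)) (take (k - j) (drop j (snd p)))"

definition pcomp :: "('o,'a,'b) tcat \<Rightarrow> ('o,'a) path \<Rightarrow> 'a" where
  "pcomp C p = pseg C p 0 (length (snd p))"

text \<open>Horizontal composite a_k o ... o a_(j+1) of a list of 2-cells
  (identity 2-cell of the identity 1-cell at x if j = k).\<close>
definition hseg :: "('o,'a,'b) tcat \<Rightarrow> 'b list \<Rightarrow> 'o \<Rightarrow> nat \<Rightarrow> nat \<Rightarrow> 'b" where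
  "hseg C as x j k = foldl (\<lambda>acc a. hc C a acc) (id2 C (idn C x)) (take (k - j) (drop j as))"

section \<open>The category Delta_{bot top} and shuffles\<close>

text \<open>A morphism [a] \<rightarrow> [b] in Delta_{bot top}, represented by the list of its values.\<close>
definition is_dmap :: "nat \<Rightarrow> nat \<Rightarrow> nat list \<Rightarrow> bool" where
  "is_dmap a b xs \<longleftrightarrow> length xs = Suc a \<and> sorted xs \<and> xs ! 0 = 0 \<and> xs ! a = b"

definition shuffle :: "nat \<Rightarrow> nat \<Rightarrow> nat list \<Rightarrow> nat list \<Rightarrow> bool" where
  "shuffle n m r s \<longleftrightarrow> is_dmap (n + m) n r \<and> is_dmap (n + m) m s \<and>
     (\<forall>i < n + m. (r ! Suc i = Suc (r ! i) \<and> s ! Suc i = s ! i) \<or>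
                  (r ! Suc i = r ! i \<and> s ! Suc i = Suc (s ! i)))"

definition preim :: "nat list \<Rightarrow> nat \<Rightarrow> nat set" where
  "preim r k = {i. i < length r \<and> r ! i = k}"

section \<open>The 2-category C boxtimes_sim D\<close>

type_synonym ('o1,'a1,'o2,'a2) sarr =
  "nat \<times> ('o1,'a1) path \<times> nat list \<times> nat \<times> ('o2,'a2) path \<times> nat list"

text \<open>2-cells: source 1-cell, target 1-cell, xi, alpha (list of components alpha_1..alpha_nbar),
  rho, beta.\<close>
type_synonym ('o1,'a1,'b1,'o2,'a2,'b2) scell =
  "('o1,'a1,'o2,'a2) sarr \<times> ('o1,'a1,'o2,'a2) sarr \<times> nat list \<times> 'b1 list \<times> nat list \<times> 'b2 list"

definition a_n :: "('o1,'a1,'o2,'a2) sarr \<Rightarrow> nat" where "a_n f = fst f"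
definition a_p :: "('o1,'a1,'o2,'a2) sarr \<Rightarrow> ('o1,'a1) path" where "a_p f = fst (snd f)"
definition a_r :: "('o1,'a1,'o2,'a2) sarr \<Rightarrow> nat list" where "a_r f = fst (snd (snd f))"
definition a_m :: "('o1,'a1,'o2,'a2) sarr \<Rightarrow> nat" where "a_m f = fst (snd (snd (snd f)))"
definition a_q :: "('o1,'a1,'o2,'a2) sarr \<Rightarrow> ('o2,'a2) path" where
  "a_q f = fst (snd (snd (snd (snd f))))"
definition a_s :: "('o1,'a1,'o2,'a2) sarr \<Rightarrow> nat list" where
  "a_s f = snd (snd (snd (snd (snd f))))"

definition c_src :: "('o1,'a1,'b1,'o2,'a2,'b2) scell \<Rightarrow> ('o1,'a1,'o2,'a2) sarr" where
  "c_src a = fst a"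
definition c_tgt :: "('o1,'a1,'b1,'o2,'a2,'b2) scell \<Rightarrow> ('o1,'a1,'o2,'a2) sarr" where
  "c_tgt a = fst (snd a)"
definition c_xi :: "('o1,'a1,'b1,'o2,'a2,'b2) scell \<Rightarrow> nat list" where
  "c_xi a = fst (snd (snd a))"
definition c_al :: "('o1,'a1,'b1,'o2,'a2,'b2) scell \<Rightarrow> 'b1 list" where
  "c_al a = fst (snd (snd (snd a)))"
definition c_rho :: "('o1,'a1,'b1,'o2,'a2,'b2) scell \<Rightarrow> nat list" where
  "c_rho a = fst (snd (snd (snd (snd a))))"
definition c_be :: "('o1,'a1,'b1,'o2,'a2,'b2) scell \<Rightarrow> 'b2 list" where
  "c_be a = snd (snd (snd (snd (snd a))))"

definition sim_arr :: "('o1,'a1,'b1) tcat \<Rightarrow> ('o2,'a2,'b2) tcat \<Rightarrow> ('o1,'a1,'o2,'a2) sarr set" where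
  "sim_arr C D = {f. is_path C (a_n f) (a_p f) \<and> is_path D (a_m f) (a_q f) \<and>
                     shuffle (a_n f) (a_m f) (a_r f) (a_s f)}"

definition sim_dom :: "('o1,'a1,'b1) tcat \<Rightarrow> ('o2,'a2,'b2) tcat \<Rightarrow> ('o1,'a1,'o2,'a2) sarr \<Rightarrow> 'o1 \<times> 'o2" where
  "sim_dom C D f = (fst (a_p f), fst (a_q f))"

definition sim_cod :: "('o1,'a1,'b1) tcat \<Rightarrow> ('o2,'a2,'b2) tcat \<Rightarrow> ('o1,'a1,'o2,'a2) sarr \<Rightarrow> 'o1 \<times> 'o2" where
  "sim_cod C D f = (pobj C (a_p f) (a_n f), pobj D (a_q f) (a_m f))"

definition sim_idn :: "'o1 \<times> 'o2 \<Rightarrow> ('o1,'a1,'o2,'a2) sarr" where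
  "sim_idn x = (0, (fst x, []), [0], 0, (snd x, []), [0])"

text \<open>sim_cmp g f: first f, then g (concatenation).\<close>
definition sim_cmp :: "('o1,'a1,'o2,'a2) sarr \<Rightarrow> ('o1,'a1,'o2,'a2) sarr \<Rightarrow> ('o1,'a1,'o2,'a2) sarr" where
  "sim_cmp g f = (a_n f + a_n g, (fst (a_p f), snd (a_p f) @ snd (a_p g)),
                  a_r f @ map (\<lambda>i. i + a_n f) (tl (a_r g)),
                  a_m f + a_m g, (fst (a_q f), snd (a_q f) @ snd (a_q g)),
                  a_s f @ map (\<lambda>i. i + a_m f) (tl (a_s g)))"

text \<open>alpha is an icon p o xi => pbar (xi : [nbar] \<rightarrow> [n]).\<close>
definition icon_path :: "('o,'a,'b) tcat \<Rightarrow> ('o,'a) path \<Rightarrow> nat list \<Rightarrow> 'b list \<Rightarrow> ('o,'a) path \<Rightarrow> bool" where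
  "icon_path C p xi al pb \<longleftrightarrow> length al = length (snd pb) \<and>
     (\<forall>i \<le> length (snd pb). pobj C p (xi ! i) = pobj C pb i) \<and>
     (\<forall>i \<in> {1..length (snd pb)}. al ! (i - 1) \<in> Cl C \<and>
         src2 C (al ! (i - 1)) = pseg C p (xi ! (i - 1)) (xi ! i) \<and>
         tgt2 C (al ! (i - 1)) = snd pb ! (i - 1))"

definition sim_cell :: "('o1,'a1,'b1) tcat \<Rightarrow> ('o2,'a2,'b2) tcat \<Rightarrow>
    ('o1,'a1,'b1,'o2,'a2,'b2) scell set" where
  "sim_cell C D = {a. c_src a \<in> sim_arr C D \<and> c_tgt a \<in> sim_arr C D \<and>
      sim_dom C D (c_src a) = sim_dom C D (c_tgt a) \<and> sim_cod C D (c_src a) = sim_cod C D (c_tgt a) \<and>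
      is_dmap (a_n (c_tgt a)) (a_n (c_src a)) (c_xi a) \<and>
      is_dmap (a_m (c_tgt a)) (a_m (c_src a)) (c_rho a) \<and>
      (\<forall>i \<le> a_n (c_tgt a) + a_m (c_tgt a).
          Min (preim (a_r (c_src a)) (c_xi a ! (a_r (c_tgt a) ! i)))
            \<le> Max (preim (a_s (c_src a)) (c_rho a ! (a_s (c_tgt a) ! i)))) \<and>
      icon_path C (a_p (c_src a)) (c_xi a) (c_al a) (a_p (c_tgt a)) \<and>
      icon_path D (a_q (c_src a)) (c_rho a) (c_be a) (a_q (c_tgt a))}"

definition sim_id2 :: "('o1,'a1,'b1) tcat \<Rightarrow> ('o2,'a2,'b2) tcat \<Rightarrow>
    ('o1,'a1,'o2,'a2) sarr \<Rightarrow> ('o1,'a1,'b1,'o2,'a2,'b2) scell" where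
  "sim_id2 C D f = (f, f, [0..<Suc (a_n f)], map (id2 C) (snd (a_p f)),
                    [0..<Suc (a_m f)], map (id2 D) (snd (a_q f)))"

text \<open>sim_vc C D b a: first a, then b.  Components
  (bar alpha) bullet (alpha bar xi), with (alpha bar xi)_i = alpha_{bar xi(i)} o ... o alpha_{bar xi(i-1)+1}.\<close>
definition sim_vc :: "('o1,'a1,'b1) tcat \<Rightarrow> ('o2,'a2,'b2) tcat \<Rightarrow>
    ('o1,'a1,'b1,'o2,'a2,'b2) scell \<Rightarrow> ('o1,'a1,'b1,'o2,'a2,'b2) scell \<Rightarrow> ('o1,'a1,'b1,'o2,'a2,'b2) scell" where
  "sim_vc C D b a = (c_src a, c_tgt b, map (\<lambda>i. c_xi a ! i) (c_xi b),
     map (\<lambda>i. vc C (c_al b ! (i - 1))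
                  (hseg C (c_al a) (pobj C (a_p (c_tgt a)) (c_xi b ! (i - 1))) (c_xi b ! (i - 1)) (c_xi b ! i)))
         [1..<Suc (a_n (c_tgt b))],
     map (\<lambda>i. c_rho a ! i) (c_rho b),
     map (\<lambda>i. vc D (c_be b ! (i - 1))
                  (hseg D (c_be a) (pobj D (a_q (c_tgt a)) (c_rho b ! (i - 1))) (c_rho b ! (i - 1)) (c_rho b ! i)))
         [1..<Suc (a_m (c_tgt b))])"

text \<open>sim_hc b a: first a, then b (concatenation).\<close>
definition sim_hc :: "('o1,'a1,'b1,'o2,'a2,'b2) scell \<Rightarrow> ('o1,'a1,'b1,'o2,'a2,'b2) scell \<Rightarrow> ('o1,'a1,'b1,'o2,'a2,'b2) scell" where
  "sim_hc b a = (sim_cmp (c_src b) (c_src a), sim_cmp (c_tgt b) (c_tgt a),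
     c_xi a @ map (\<lambda>i. i + a_n (c_src a)) (tl (c_xi b)), c_al a @ c_al b,
     c_rho a @ map (\<lambda>i. i + a_m (c_src a)) (tl (c_rho b)), c_be a @ c_be b)"

definition simcat :: "('o1,'a1,'b1) tcat \<Rightarrow> ('o2,'a2,'b2) tcat \<Rightarrow>
    ('o1 \<times> 'o2, ('o1,'a1,'o2,'a2) sarr, ('o1,'a1,'b1,'o2,'a2,'b2) scell) tcat" where
  "simcat C D = \<lparr> Ob = Ob C \<times> Ob D, Ar = sim_arr C D, dom1 = sim_dom C D, cod1 = sim_cod C D,
     idn = sim_idn, cmp = sim_cmp, Cl = sim_cell C D, src2 = c_src, tgt2 = c_tgt,
     id2 = sim_id2 C D, vc = sim_vc C D, hc = sim_hc \<rparr>"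

record ('o1,'a1,'b1,'o2,'a2,'b2) lfun =
  fob   :: "'o1 \<Rightarrow> 'o2"
  far   :: "'a1 \<Rightarrow> 'a2"
  fcl   :: "'b1 \<Rightarrow> 'b2"
  funit :: "'o1 \<Rightarrow> 'b2"            \<comment> \<open>funit x : 1_{F x} => F(1_x)\<close>
  fcomp :: "'a1 \<Rightarrow> 'a1 \<Rightarrow> 'b2"     \<comment> \<open>fcomp g f : F g o F f => F(g o f)\<close>

definition lax_functor :: "('o1,'a1,'b1) tcat \<Rightarrow> ('o2,'a2,'b2) tcat \<Rightarrow>
    ('o1,'a1,'b1,'o2,'a2,'b2) lfun \<Rightarrow> bool" where
  "lax_functor X Y F \<longleftrightarrow>
    (\<forall>x\<in>Ob X. fob F x \<in> Ob Y) \<and>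
    (\<forall>f\<in>Ar X. far F f \<in> Ar Y \<and> dom1 Y (far F f) = fob F (dom1 X f) \<and> cod1 Y (far F f) = fob F (cod1 X f)) \<and>
    (\<forall>a\<in>Cl X. fcl F a \<in> Cl Y \<and> src2 Y (fcl F a) = far F (src2 X a) \<and> tgt2 Y (fcl F a) = far F (tgt2 X a)) \<and>
    (\<forall>f\<in>Ar X. fcl F (id2 X f) = id2 Y (far F f)) \<and>
    (\<forall>a\<in>Cl X. \<forall>b\<in>Cl X. tgt2 X a = src2 X b \<longrightarrow> fcl F (vc X b a) = vc Y (fcl F b) (fcl F a)) \<and>
    (\<forall>x\<in>Ob X. funit F x \<in> Cl Y \<and> src2 Y (funit F x) = idn Y (fob F x) \<and>
        tgt2 Y (funit F x) = far F (idn X x)) \<and>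
    (\<forall>f\<in>Ar X. \<forall>g\<in>Ar X. cod1 X f = dom1 X g \<longrightarrow>
        fcomp F g f \<in> Cl Y \<and> src2 Y (fcomp F g f) = cmp Y (far F g) (far F f) \<and>
        tgt2 Y (fcomp F g f) = far F (cmp X g f)) \<and>
    (\<forall>a\<in>Cl X. \<forall>b\<in>Cl X. cod1 X (src2 X a) = dom1 X (src2 X b) \<longrightarrow>
        vc Y (fcomp F (tgt2 X b) (tgt2 X a)) (hc Y (fcl F b) (fcl F a))
          = vc Y (fcl F (hc X b a)) (fcomp F (src2 X b) (src2 X a))) \<and>
    (\<forall>f\<in>Ar X. \<forall>g\<in>Ar X. \<forall>h\<in>Ar X. cod1 X f = dom1 X g \<longrightarrow> cod1 X g = dom1 X h \<longrightarrow>
        vc Y (fcomp F h (cmp X g f)) (hc Y (id2 Y (far F h)) (fcomp F g f))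
          = vc Y (fcomp F (cmp X h g) f) (hc Y (fcomp F h g) (id2 Y (far F f)))) \<and>
    (\<forall>f\<in>Ar X.
        vc Y (fcomp F f (idn X (dom1 X f))) (hc Y (id2 Y (far F f)) (funit F (dom1 X f))) = id2 Y (far F f) \<and>
        vc Y (fcomp F (idn X (cod1 X f)) f) (hc Y (funit F (cod1 X f)) (id2 Y (far F f))) = id2 Y (far F f))"

definition strict_functor :: "('o1,'a1,'b1) tcat \<Rightarrow> ('o2,'a2,'b2) tcat \<Rightarrow>
    ('o1,'a1,'b1,'o2,'a2,'b2) lfun \<Rightarrow> bool" where
  "strict_functor X Y F \<longleftrightarrow> lax_functor X Y F \<and>
    (\<forall>x\<in>Ob X. far F (idn X x) = idn Y (fob F x) \<and> funit F x = id2 Y (idn Y (fob F x))) \<and>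
    (\<forall>f\<in>Ar X. \<forall>g\<in>Ar X. cod1 X f = dom1 X g \<longrightarrow>
        far F (cmp X g f) = cmp Y (far F g) (far F f) \<and>
        fcomp F g f = id2 Y (cmp Y (far F g) (far F f)))"

text \<open>Composite G o F (Z is the codomain of G) and identity lax functor.\<close>
definition lcomp :: "('o3,'a3,'b3) tcat \<Rightarrow> ('o2,'a2,'b2,'o3,'a3,'b3) lfun \<Rightarrow>
    ('o1,'a1,'b1,'o2,'a2,'b2) lfun \<Rightarrow> ('o1,'a1,'b1,'o3,'a3,'b3) lfun" where
  "lcomp Z G F = \<lparr> fob = fob G \<circ> fob F, far = far G \<circ> far F, fcl = fcl G \<circ> fcl F,
     funit = (\<lambda>x. vc Z (fcl G (funit F x)) (funit G (fob F x))),
     fcomp = (\<lambda>g f. vc Z (fcl G (fcomp F g f)) (fcomp G (far F g) (far F f))) \<rparr>"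

definition lid :: "('o,'a,'b) tcat \<Rightarrow> ('o,'a,'b,'o,'a,'b) lfun" where
  "lid X = \<lparr> fob = id, far = id, fcl = id, funit = (\<lambda>x. id2 X (idn X x)),
     fcomp = (\<lambda>g f. id2 X (cmp X g f)) \<rparr>"

definition lfun_eq :: "('o1,'a1,'b1) tcat \<Rightarrow> ('o1,'a1,'b1,'o2,'a2,'b2) lfun \<Rightarrow>
    ('o1,'a1,'b1,'o2,'a2,'b2) lfun \<Rightarrow> bool" where
  "lfun_eq X F G \<longleftrightarrow>
    (\<forall>x\<in>Ob X. fob F x = fob G x \<and> funit F x = funit G x) \<and>
    (\<forall>f\<in>Ar X. far F f = far G f) \<and>
    (\<forall>a\<in>Cl X. fcl F a = fcl G a) \<and>
    (\<forall>f\<in>Ar X. \<forall>g\<in>Ar X. cod1 X f = dom1 X g \<longrightarrow> fcomp F g f = fcomp G g f)"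

definition icon :: "('o1,'a1,'b1) tcat \<Rightarrow> ('o2,'a2,'b2) tcat \<Rightarrow>
    ('o1,'a1,'b1,'o2,'a2,'b2) lfun \<Rightarrow> ('o1,'a1,'b1,'o2,'a2,'b2) lfun \<Rightarrow> ('a1 \<Rightarrow> 'b2) \<Rightarrow> bool" where
  "icon X Y F G \<theta> \<longleftrightarrow>
    (\<forall>x\<in>Ob X. fob F x = fob G x) \<and>
    (\<forall>f\<in>Ar X. \<theta> f \<in> Cl Y \<and> src2 Y (\<theta> f) = far F f \<and> tgt2 Y (\<theta> f) = far G f) \<and>
    (\<forall>a\<in>Cl X. vc Y (fcl G a) (\<theta> (src2 X a)) = vc Y (\<theta> (tgt2 X a)) (fcl F a)) \<and>
    (\<forall>x\<in>Ob X. vc Y (\<theta> (idn X x)) (funit F x) = funit G x) \<and>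
    (\<forall>f\<in>Ar X. \<forall>g\<in>Ar X. cod1 X f = dom1 X g \<longrightarrow>
        vc Y (\<theta> (cmp X g f)) (fcomp F g f) = vc Y (fcomp G g f) (hc Y (\<theta> g) (\<theta> f)))"

definition Lfun :: "('o1,'a1,'b1) tcat \<Rightarrow> ('o2,'a2,'b2) tcat \<Rightarrow>
    ('o1 \<times> 'o2, ('o1,'a1,'o2,'a2) sarr, ('o1,'a1,'b1,'o2,'a2,'b2) scell, 'o1 \<times> 'o2, 'a1 \<times> 'a2, 'b1 \<times> 'b2) lfun" where
  "Lfun C D = \<lparr> fob = id,
     far = (\<lambda>f. (pcomp C (a_p f), pcomp D (a_q f))),
     fcl = (\<lambda>a. (hseg C (c_al a) (fst (a_p (c_tgt a))) 0 (a_n (c_tgt a)),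
                  hseg D (c_be a) (fst (a_q (c_tgt a))) 0 (a_m (c_tgt a)))),
     funit = (\<lambda>x. id2 (prodcat C D) (idn (prodcat C D) x)),
     fcomp = (\<lambda>g f. id2 (prodcat C D) (cmp (prodcat C D)
                 (pcomp C (a_p g), pcomp D (a_q g)) (pcomp C (a_p f), pcomp D (a_q f)))) \<rparr>"

definition Rarr :: "('o1,'a1,'b1) tcat \<Rightarrow> ('o2,'a2,'b2) tcat \<Rightarrow> 'a1 \<times> 'a2 \<Rightarrow> ('o1,'a1,'o2,'a2) sarr" where
  "Rarr C D cd = (1, (dom1 C (fst cd), [fst cd]), [0,0,1], 1, (dom1 D (snd cd), [snd cd]), [0,1,1])"

definition Rfun :: "('o1,'a1,'b1) tcat \<Rightarrow> ('o2,'a2,'b2) tcat \<Rightarrow>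
    ('o1 \<times> 'o2, 'a1 \<times> 'a2, 'b1 \<times> 'b2, 'o1 \<times> 'o2, ('o1,'a1,'o2,'a2) sarr, ('o1,'a1,'b1,'o2,'a2,'b2) scell) lfun" where
  "Rfun C D = \<lparr> fob = id,
     far = Rarr C D,
     fcl = (\<lambda>gd. (Rarr C D (src2 C (fst gd), src2 D (snd gd)), Rarr C D (tgt2 C (fst gd), tgt2 D (snd gd)),
                  [0,1], [fst gd], [0,1], [snd gd])),
     funit = (\<lambda>x. (sim_idn x, Rarr C D (idn C (fst x), idn D (snd x)),
                  [0,0], [id2 C (idn C (fst x))], [0,0], [id2 D (idn D (snd x))])),
     fcomp = (\<lambda>g f. (sim_cmp (Rarr C D g) (Rarr C D f),
                  Rarr C D (cmp C (fst g) (fst f), cmp D (snd g) (snd f)),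
                  [0,2], [id2 C (cmp C (fst g) (fst f))], [0,2], [id2 D (cmp D (snd g) (snd f))])) \<rparr>"

definition eta :: "('o1,'a1,'b1) tcat \<Rightarrow> ('o2,'a2,'b2) tcat \<Rightarrow>
    ('o1,'a1,'o2,'a2) sarr \<Rightarrow> ('o1,'a1,'b1,'o2,'a2,'b2) scell" where
  "eta C D f = (f, Rarr C D (far (Lfun C D) f), [0, a_n f], [id2 C (pcomp C (a_p f))],
                [0, a_m f], [id2 D (pcomp D (a_q f))])"

end

theory Submission
  imports Defs
begin

text \<open>L collapses a path to its composite and an icon along paths to the horizontal composite of its
  components. It preserves vertical composition by the interchange law and everything else by
  associativity, so it is a strict 2-functor into the product 2-category. R sends (c,d) to the
  1-cell "first d, then c"; its comparison cells and the components of eta are all cells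
  into 1-cells of this shape, whose well-formedness comes down to one inequality for shuffles.
  What remains, L R = 1, the icon axioms for eta and the triangle identities, are computations
  with identity 2-cells.\<close>

section \<open>Composable sequences in a category\<close>

definition slice :: "nat \<Rightarrow> nat \<Rightarrow> 'a list \<Rightarrow> 'a list" where
  "slice j k xs = take (k - j) (drop j xs)"

lemma slice_append: "j \<le> k \<Longrightarrow> k \<le> l \<Longrightarrow> slice j l xs = slice j k xs @ slice k l xs"
proof -
  assume "j \<le> k" "k \<le> l"
  then have "l - j = (k - j) + (l - k)" "drop (k - j) (drop j xs) = drop k xs" by simp_all
  then show ?thesis by (simp add: slice_def take_add)
qed

lemma slice_Suc: "k < length xs \<Longrightarrow> slice k (Suc k) xs = [xs ! k]"
  by (simp add: slice_def take_Suc_conv_app_nth)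

lemma slice_self [simp]: "slice k k xs = []"
  by (simp add: slice_def)

lemma slice_full: "length xs = n \<Longrightarrow> slice 0 n xs = xs"
  by (simp add: slice_def)

lemma map_slice: "map f (slice j k xs) = slice j k (map f xs)"
  by (simp add: slice_def take_map drop_map)

lemma slice_map_upt: "j \<le> k \<Longrightarrow> k \<le> N \<Longrightarrow> slice j k (map f [0..<N]) = map f [j..<k]"
  by (simp add: slice_def take_map drop_map)

locale category =
  fixes Obj :: "'o set" and Arr :: "'a set" and src tgt :: "'a \<Rightarrow> 'o" and ident :: "'o \<Rightarrow> 'a"
    and comp :: "'a \<Rightarrow> 'a \<Rightarrow> 'a"
  assumes src_tgt_obj: "f \<in> Arr \<Longrightarrow> src f \<in> Obj \<and> tgt f \<in> Obj"
    and ident_arr: "x \<in> Obj \<Longrightarrow> ident x \<in> Arr \<and> src (ident x) = x \<and> tgt (ident x) = x"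
    and comp_arr: "f \<in> Arr \<Longrightarrow> g \<in> Arr \<Longrightarrow> tgt f = src g \<Longrightarrow>
      comp g f \<in> Arr \<and> src (comp g f) = src f \<and> tgt (comp g f) = tgt g"
    and comp_ident_right: "f \<in> Arr \<Longrightarrow> comp f (ident (src f)) = f"
    and comp_ident_left: "f \<in> Arr \<Longrightarrow> comp (ident (tgt f)) f = f"
    and comp_assoc: "f \<in> Arr \<Longrightarrow> g \<in> Arr \<Longrightarrow> h \<in> Arr \<Longrightarrow> tgt f = src g \<Longrightarrow> tgt g = src h \<Longrightarrow>
      comp h (comp g f) = comp (comp h g) f"
begin

definition comp_list :: "'o \<Rightarrow> 'a list \<Rightarrow> 'a" where
  "comp_list x fs = foldl (\<lambda>acc f. comp f acc) (ident x) fs"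

fun composable :: "'o \<Rightarrow> 'a list \<Rightarrow> 'o \<Rightarrow> bool" where
  "composable x [] y \<longleftrightarrow> x = y \<and> x \<in> Obj"
| "composable x (f # fs) y \<longleftrightarrow> f \<in> Arr \<and> src f = x \<and> composable (tgt f) fs y"

lemma composable_append:
  "composable x (fs @ gs) z \<longleftrightarrow> (\<exists>y. composable x fs y \<and> composable y gs z)"
proof (induction fs arbitrary: x)
  case Nil
  show ?case
  proof
    assume "composable x ([] @ gs) z"
    moreover then have "x \<in> Obj" using src_tgt_obj by (cases gs) auto
    ultimately show "\<exists>y. composable x [] y \<and> composable y gs z" by auto
  qed auto
qed auto

lemma composable_obj: "composable x fs y \<Longrightarrow> x \<in> Obj \<and> y \<in> Obj"
  by (induction fs arbitrary: x) (auto dest: src_tgt_obj)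

lemma foldl_comp_eq_comp_list:
  "composable x fs y \<Longrightarrow> a \<in> Arr \<Longrightarrow> tgt a = x \<Longrightarrow>
   foldl (\<lambda>acc f. comp f acc) a fs = comp (comp_list x fs) a \<and>
   comp_list x fs \<in> Arr \<and> src (comp_list x fs) = x \<and> tgt (comp_list x fs) = y"
proof (induction fs arbitrary: x a)
  case Nil
  then show ?case by (auto simp: comp_list_def comp_ident_left ident_arr)
next
  case (Cons f fs)
  then have f: "f \<in> Arr" "src f = x" "composable (tgt f) fs y" by auto
  have fa: "comp f a \<in> Arr" "tgt (comp f a) = tgt f" using comp_arr[of a f] f Cons.prems by auto
  note IH = Cons.IH[OF f(3) fa] Cons.IH[OF f(3) f(1) refl]
  have "comp_list x (f # fs) = comp (comp_list (tgt f) fs) f"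
    using IH(2) comp_ident_right[OF f(1)] f(2) by (simp add: comp_list_def)
  then show ?case
    using IH f Cons.prems comp_arr[of f "comp_list (tgt f) fs"] by (auto simp: comp_assoc)
qed

lemma comp_list_arr:
  "composable x fs y \<Longrightarrow> comp_list x fs \<in> Arr \<and> src (comp_list x fs) = x \<and> tgt (comp_list x fs) = y"
  using foldl_comp_eq_comp_list[of x fs y "ident x"] composable_obj ident_arr by auto

lemma comp_list_append:
  "composable x fs y \<Longrightarrow> composable y gs z \<Longrightarrow>
   comp_list x (fs @ gs) = comp (comp_list y gs) (comp_list x fs)"
  using foldl_comp_eq_comp_list[of y gs z "comp_list x fs"] comp_list_arr[of x fs y]
  by (simp add: comp_list_def[of x "fs @ gs"] comp_list_def[of x fs])

lemma comp_list_snoc: "comp_list x (fs @ [f]) = comp f (comp_list x fs)"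
  by (simp add: comp_list_def)

lemma composable_slice:
  assumes "length xs = N" "\<forall>i<N. xs ! i \<in> Arr \<and> src (xs ! i) = ob i \<and> tgt (xs ! i) = ob (Suc i)"
    "\<forall>i\<le>N. ob i \<in> Obj" "j \<le> k" "k \<le> N"
  shows "composable (ob j) (slice j k xs) (ob k)"
  using assms(4,5)
proof (induction k)
  case 0
  then show ?case using assms(3) by auto
next
  case (Suc k)
  show ?case
  proof (cases "j = Suc k")
    case True
    then show ?thesis using assms(3) Suc.prems by auto
  next
    case False
    then have "j \<le> k" using Suc.prems by auto
    moreover have "slice j (Suc k) xs = slice j k xs @ [xs ! k]"
      using calculation slice_append[of j k "Suc k" xs] slice_Suc[of k xs] Suc.prems assms(1) by simp
    moreover have "composable (ob k) [xs ! k] (ob (Suc k))" using assms(2,3) Suc.prems by auto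
    ultimately show ?thesis using Suc composable_append by auto
  qed
qed

lemma comp_list_subdivision:
  assumes "length xs = N" "\<forall>i<N. xs ! i \<in> Arr \<and> src (xs ! i) = ob i \<and> tgt (xs ! i) = ob (Suc i)"
    "\<forall>i\<le>N. ob i \<in> Obj" "j \<le> k"
    "\<forall>i i'. j \<le> i \<longrightarrow> i \<le> i' \<longrightarrow> i' \<le> k \<longrightarrow> \<xi> i \<le> \<xi> i'" "\<xi> k \<le> N"
  defines "pieces \<equiv> \<lambda>k. map (\<lambda>i. comp_list (ob (\<xi> i)) (slice (\<xi> i) (\<xi> (Suc i)) xs)) [j..<k]"
  shows "composable (ob (\<xi> j)) (pieces k) (ob (\<xi> k))
      \<and> comp_list (ob (\<xi> j)) (pieces k) = comp_list (ob (\<xi> j)) (slice (\<xi> j) (\<xi> k) xs)"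
  using assms(4,5,6)
proof (induction k)
  case 0
  then show ?case using assms(3) by (auto simp: pieces_def)
next
  case (Suc k)
  show ?case
  proof (cases "j = Suc k")
    case True
    then show ?thesis using assms(3) Suc.prems by (auto simp: comp_list_def pieces_def)
  next
    case False
    then have jk: "j \<le> k" using Suc.prems by auto
    have \<xi>: "\<xi> j \<le> \<xi> k" "\<xi> k \<le> \<xi> (Suc k)" using Suc.prems jk by auto
    then have \<xi>N: "\<xi> k \<le> N" using Suc.prems by linarith
    note IH = Suc.IH[OF jk _ \<xi>N]
    have last: "composable (ob (\<xi> k)) (slice (\<xi> k) (\<xi> (Suc k)) xs) (ob (\<xi> (Suc k)))"
      and init: "composable (ob (\<xi> j)) (slice (\<xi> j) (\<xi> k) xs) (ob (\<xi> k))"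
      using composable_slice[OF assms(1-3)] \<xi> \<xi>N Suc.prems by auto
    have pieces: "pieces (Suc k) = pieces k @ [comp_list (ob (\<xi> k)) (slice (\<xi> k) (\<xi> (Suc k)) xs)]"
      using jk by (simp add: pieces_def)
    have "composable (ob (\<xi> j)) (pieces (Suc k)) (ob (\<xi> (Suc k)))"
      unfolding pieces using IH Suc.prems comp_list_arr[OF last] composable_obj[OF last]
      by (auto simp: composable_append)
    moreover have "comp_list (ob (\<xi> j)) (pieces (Suc k))
        = comp (comp_list (ob (\<xi> k)) (slice (\<xi> k) (\<xi> (Suc k)) xs))
            (comp_list (ob (\<xi> j)) (slice (\<xi> j) (\<xi> k) xs))"
      unfolding pieces using IH Suc.prems by (simp add: comp_list_snoc)
    ultimately show ?thesis
      using comp_list_append[OF init last] slice_append[of "\<xi> j" "\<xi> k" "\<xi> (Suc k)" xs] \<xi> by simp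
  qed
qed

end

section \<open>Paths and icons in a 2-category\<close>

lemma dmapD:
  assumes "is_dmap nb n xi"
  shows "length xi = Suc nb" "xi ! 0 = 0" "xi ! nb = n" "\<forall>i j. i \<le> j \<longrightarrow> j \<le> nb \<longrightarrow> xi ! i \<le> xi ! j"
  using assms unfolding is_dmap_def by (auto intro: sorted_nth_mono)

locale two_category =
  fixes C :: "('o,'a,'b) tcat"
  assumes twocat: "twocat C"
begin

lemma arr_dom_cod: "f \<in> Ar C \<Longrightarrow> dom1 C f \<in> Ob C \<and> cod1 C f \<in> Ob C"
  using twocat unfolding twocat_def by simp

lemma idn_arr: "x \<in> Ob C \<Longrightarrow> idn C x \<in> Ar C \<and> dom1 C (idn C x) = x \<and> cod1 C (idn C x) = x"
  using twocat unfolding twocat_def by simp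

lemma cmp_arr: "f \<in> Ar C \<Longrightarrow> g \<in> Ar C \<Longrightarrow> cod1 C f = dom1 C g \<Longrightarrow>
    cmp C g f \<in> Ar C \<and> dom1 C (cmp C g f) = dom1 C f \<and> cod1 C (cmp C g f) = cod1 C g"
  using twocat unfolding twocat_def by simp

lemma cmp_idn_right: "f \<in> Ar C \<Longrightarrow> cmp C f (idn C (dom1 C f)) = f"
  using twocat unfolding twocat_def by simp

lemma cmp_idn_left: "f \<in> Ar C \<Longrightarrow> cmp C (idn C (cod1 C f)) f = f"
  using twocat unfolding twocat_def by simp

lemma cmp_assoc: "f \<in> Ar C \<Longrightarrow> g \<in> Ar C \<Longrightarrow> h \<in> Ar C \<Longrightarrow> cod1 C f = dom1 C g \<Longrightarrow>
    cod1 C g = dom1 C h \<Longrightarrow> cmp C h (cmp C g f) = cmp C (cmp C h g) f"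
  using twocat unfolding twocat_def by simp

lemma cell_src_tgt: "a \<in> Cl C \<Longrightarrow> src2 C a \<in> Ar C \<and> tgt2 C a \<in> Ar C \<and>
    dom1 C (src2 C a) = dom1 C (tgt2 C a) \<and> cod1 C (src2 C a) = cod1 C (tgt2 C a)"
  using twocat unfolding twocat_def by simp

lemma id2_cell: "f \<in> Ar C \<Longrightarrow> id2 C f \<in> Cl C \<and> src2 C (id2 C f) = f \<and> tgt2 C (id2 C f) = f"
  using twocat unfolding twocat_def by simp

lemma vc_cell: "a \<in> Cl C \<Longrightarrow> b \<in> Cl C \<Longrightarrow> tgt2 C a = src2 C b \<Longrightarrow>
    vc C b a \<in> Cl C \<and> src2 C (vc C b a) = src2 C a \<and> tgt2 C (vc C b a) = tgt2 C b"
  using twocat unfolding twocat_def by simp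

lemma vc_id2_right: "a \<in> Cl C \<Longrightarrow> vc C a (id2 C (src2 C a)) = a"
  using twocat unfolding twocat_def by simp

lemma vc_id2_left: "a \<in> Cl C \<Longrightarrow> vc C (id2 C (tgt2 C a)) a = a"
  using twocat unfolding twocat_def by simp

lemma vc_assoc: "a \<in> Cl C \<Longrightarrow> b \<in> Cl C \<Longrightarrow> c \<in> Cl C \<Longrightarrow> tgt2 C a = src2 C b \<Longrightarrow>
    tgt2 C b = src2 C c \<Longrightarrow> vc C c (vc C b a) = vc C (vc C c b) a"
  using twocat unfolding twocat_def by simp

lemma hc_cell: "a \<in> Cl C \<Longrightarrow> b \<in> Cl C \<Longrightarrow> cod1 C (src2 C a) = dom1 C (src2 C b) \<Longrightarrow>
    hc C b a \<in> Cl C \<and> src2 C (hc C b a) = cmp C (src2 C b) (src2 C a) \<and>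
    tgt2 C (hc C b a) = cmp C (tgt2 C b) (tgt2 C a)"
  using twocat unfolding twocat_def by simp

lemma hc_id2_idn_right: "a \<in> Cl C \<Longrightarrow> hc C a (id2 C (idn C (dom1 C (src2 C a)))) = a"
  using twocat unfolding twocat_def by blast

lemma hc_id2_idn_left: "a \<in> Cl C \<Longrightarrow> hc C (id2 C (idn C (cod1 C (src2 C a)))) a = a"
  using twocat unfolding twocat_def by blast

lemma hc_assoc: "a \<in> Cl C \<Longrightarrow> b \<in> Cl C \<Longrightarrow> c \<in> Cl C \<Longrightarrow> cod1 C (src2 C a) = dom1 C (src2 C b) \<Longrightarrow>
    cod1 C (src2 C b) = dom1 C (src2 C c) \<Longrightarrow> hc C c (hc C b a) = hc C (hc C c b) a"
  using twocat unfolding twocat_def by simp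

lemma hc_id2: "f \<in> Ar C \<Longrightarrow> g \<in> Ar C \<Longrightarrow> cod1 C f = dom1 C g \<Longrightarrow>
    hc C (id2 C g) (id2 C f) = id2 C (cmp C g f)"
  using twocat unfolding twocat_def by simp

lemma interchange: "a \<in> Cl C \<Longrightarrow> a' \<in> Cl C \<Longrightarrow> b \<in> Cl C \<Longrightarrow> b' \<in> Cl C \<Longrightarrow>
    tgt2 C a = src2 C a' \<Longrightarrow> tgt2 C b = src2 C b' \<Longrightarrow> cod1 C (src2 C a) = dom1 C (src2 C b) \<Longrightarrow>
    hc C (vc C b' b) (vc C a' a) = vc C (hc C b' a') (hc C b a)"
  using twocat unfolding twocat_def by simp

lemma vc_id2_id2: "f \<in> Ar C \<Longrightarrow> vc C (id2 C f) (id2 C f) = id2 C f"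
  using vc_id2_right[of "id2 C f"] id2_cell by auto

lemma cmp_idn_idn: "x \<in> Ob C \<Longrightarrow> cmp C (idn C x) (idn C x) = idn C x"
  using cmp_idn_right[of "idn C x"] idn_arr by simp

lemma hc_id2_idn_right': "a \<in> Cl C \<Longrightarrow> hc C a (id2 C (idn C (dom1 C (tgt2 C a)))) = a"
  using hc_id2_idn_right cell_src_tgt by metis

lemma hc_id2_idn_left': "a \<in> Cl C \<Longrightarrow> hc C (id2 C (idn C (cod1 C (tgt2 C a)))) a = a"
  using hc_id2_idn_left cell_src_tgt by metis

lemma hc_id2_id2_idn: "f \<in> Ar C \<Longrightarrow> dom1 C f = x \<Longrightarrow> hc C (id2 C f) (id2 C (idn C x)) = id2 C f"
  using hc_id2_idn_right[of "id2 C f"] id2_cell by simp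

sublocale arr: category "Ob C" "Ar C" "dom1 C" "cod1 C" "idn C" "cmp C"
  by unfold_locales (auto simp: arr_dom_cod idn_arr cmp_arr cmp_idn_right cmp_idn_left cmp_assoc)

sublocale horiz: category "Ob C" "Cl C" "\<lambda>a. dom1 C (src2 C a)" "\<lambda>a. cod1 C (src2 C a)"
   "\<lambda>x. id2 C (idn C x)" "hc C"
proof unfold_locales
  fix a assume "a \<in> Cl C"
  then show "dom1 C (src2 C a) \<in> Ob C \<and> cod1 C (src2 C a) \<in> Ob C"
    using cell_src_tgt arr_dom_cod by blast
next
  fix x assume "x \<in> Ob C"
  then show "id2 C (idn C x) \<in> Cl C \<and> dom1 C (src2 C (id2 C (idn C x))) = x \<and>
      cod1 C (src2 C (id2 C (idn C x))) = x"
    using idn_arr id2_cell by auto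
next
  fix a b assume "a \<in> Cl C" "b \<in> Cl C" "cod1 C (src2 C a) = dom1 C (src2 C b)"
  then show "hc C b a \<in> Cl C \<and> dom1 C (src2 C (hc C b a)) = dom1 C (src2 C a) \<and>
      cod1 C (src2 C (hc C b a)) = cod1 C (src2 C b)"
    using hc_cell cmp_arr cell_src_tgt by auto
qed (auto simp: hc_id2_idn_right hc_id2_idn_left hc_assoc)

lemma horiz_comp_list_src_tgt:
  "horiz.composable x as y \<Longrightarrow>
   src2 C (horiz.comp_list x as) = arr.comp_list x (map (src2 C) as) \<and>
   tgt2 C (horiz.comp_list x as) = arr.comp_list x (map (tgt2 C) as)"
proof (induction as arbitrary: y rule: rev_induct)
  case Nil
  then show ?case using idn_arr id2_cell by (auto simp: horiz.comp_list_def arr.comp_list_def)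
next
  case (snoc a as)
  then obtain z where z: "horiz.composable x as z" "horiz.composable z [a] y"
    by (auto simp: horiz.composable_append)
  then show ?case
    using snoc.IH[OF z(1)] horiz.comp_list_arr[OF z(1)] hc_cell[of "horiz.comp_list x as" a]
    by (auto simp: horiz.comp_list_snoc arr.comp_list_snoc)
qed

lemma horiz_comp_list_id2:
  "arr.composable x fs y \<Longrightarrow> horiz.comp_list x (map (id2 C) fs) = id2 C (arr.comp_list x fs)"
proof (induction fs arbitrary: y rule: rev_induct)
  case Nil
  then show ?case by (simp add: horiz.comp_list_def arr.comp_list_def)
next
  case (snoc f fs)
  then obtain z where z: "arr.composable x fs z" "arr.composable z [f] y"
    by (auto simp: arr.composable_append)
  then show ?case
    using snoc.IH[OF z(1)] hc_id2[of "arr.comp_list x fs" f] arr.comp_list_arr[OF z(1)]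
    by (auto simp: horiz.comp_list_snoc arr.comp_list_snoc)
qed

lemma horiz_comp_list_vc:
  assumes "\<forall>i<N. A i \<in> Cl C \<and> B i \<in> Cl C \<and> tgt2 C (A i) = src2 C (B i)"
    "horiz.composable x (map A [0..<N]) y" "horiz.composable x (map B [0..<N]) y'"
  shows "horiz.comp_list x (map (\<lambda>i. vc C (B i) (A i)) [0..<N])
       = vc C (horiz.comp_list x (map B [0..<N])) (horiz.comp_list x (map A [0..<N]))"
  using assms
proof (induction N arbitrary: y y')
  case 0
  then have "x \<in> Ob C" by auto
  then show ?case using vc_id2_id2 idn_arr by (simp add: horiz.comp_list_def)
next
  case (Suc N)
  obtain z where z: "horiz.composable x (map A [0..<N]) z" "horiz.composable z [A N] y"
    using Suc.prems(2) by (auto simp: horiz.composable_append)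
  obtain z' where z': "horiz.composable x (map B [0..<N]) z'" "horiz.composable z' [B N] y'"
    using Suc.prems(3) by (auto simp: horiz.composable_append)
  let ?a = "horiz.comp_list x (map A [0..<N])" and ?b = "horiz.comp_list x (map B [0..<N])"
  have IH: "horiz.comp_list x (map (\<lambda>i. vc C (B i) (A i)) [0..<N]) = vc C ?b ?a"
    using Suc.IH[OF _ z(1) z'(1)] Suc.prems(1) by auto
  have a: "?a \<in> Cl C" "cod1 C (src2 C ?a) = z" and b: "?b \<in> Cl C"
    using horiz.comp_list_arr[OF z(1)] horiz.comp_list_arr[OF z'(1)] by auto
  have "map (tgt2 C) (map A [0..<N]) = map (src2 C) (map B [0..<N])" using Suc.prems(1) by auto
  then have ab: "tgt2 C ?a = src2 C ?b"
    using horiz_comp_list_src_tgt[OF z(1)] horiz_comp_list_src_tgt[OF z'(1)] by metis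
  have "A N \<in> Cl C" "B N \<in> Cl C" "tgt2 C (A N) = src2 C (B N)" "dom1 C (src2 C (A N)) = z"
    using Suc.prems(1) z(2) by auto
  then show ?case
    using interchange[OF a(1) b _ _ ab] a(2) IH by (simp add: horiz.comp_list_snoc)
qed

lemma is_pathD:
  assumes "is_path C n p"
  shows "\<forall>i<n. snd p ! i \<in> Ar C \<and> dom1 C (snd p ! i) = pobj C p i \<and> cod1 C (snd p ! i) = pobj C p (Suc i)"
    "\<forall>i\<le>n. pobj C p i \<in> Ob C" "length (snd p) = n" "pobj C p 0 = fst p"
proof -
  have p: "fst p \<in> Ob C" "length (snd p) = n" "set (snd p) \<subseteq> Ar C"
     "0 < n \<longrightarrow> dom1 C (snd p ! 0) = fst p" "\<forall>i. Suc i < n \<longrightarrow> cod1 C (snd p ! i) = dom1 C (snd p ! Suc i)"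
    using assms unfolding is_path_def by auto
  show arrs: "\<forall>i<n. snd p ! i \<in> Ar C \<and> dom1 C (snd p ! i) = pobj C p i \<and> cod1 C (snd p ! i) = pobj C p (Suc i)"
  proof (intro allI impI conjI)
    fix i assume i: "i < n"
    show "snd p ! i \<in> Ar C" using p(2,3) i nth_mem by blast
    show "dom1 C (snd p ! i) = pobj C p i"
      using p(4,5) i by (cases i) (simp_all add: pobj_def)
    show "cod1 C (snd p ! i) = pobj C p (Suc i)" by (simp add: pobj_def)
  qed
  show "\<forall>i\<le>n. pobj C p i \<in> Ob C"
  proof (intro allI impI)
    fix i assume "i \<le> n"
    then show "pobj C p i \<in> Ob C"
      using p(1) arrs arr_dom_cod by (cases i) (auto simp: pobj_def)
  qed
  show "length (snd p) = n" by (fact p(2))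
  show "pobj C p 0 = fst p" by (simp add: pobj_def)
qed

lemma pseg_eq_comp_list: "pseg C p j k = arr.comp_list (pobj C p j) (slice j k (snd p))"
  by (simp add: pseg_def arr.comp_list_def slice_def)

lemma hseg_eq_comp_list: "hseg C as x j k = horiz.comp_list x (slice j k as)"
  by (simp add: hseg_def horiz.comp_list_def slice_def)

lemma path_composable_slice:
  assumes "is_path C n p" "j \<le> k" "k \<le> n"
  shows "arr.composable (pobj C p j) (slice j k (snd p)) (pobj C p k)"
  using arr.composable_slice[of "snd p" n "pobj C p" j k] is_pathD[OF assms(1)] assms by auto

lemma path_composable: "is_path C n p \<Longrightarrow> arr.composable (fst p) (snd p) (pobj C p n)"
  using path_composable_slice[of n p 0 n] is_pathD[of n p] by (simp add: slice_full)

lemma pcomp_eq_comp_list: "pcomp C p = arr.comp_list (fst p) (snd p)"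
  by (simp add: pcomp_def pseg_eq_comp_list pobj_def slice_def)

lemma pcomp_arr:
  "is_path C n p \<Longrightarrow> pcomp C p \<in> Ar C \<and> dom1 C (pcomp C p) = fst p \<and> cod1 C (pcomp C p) = pobj C p n"
  using arr.comp_list_arr[OF path_composable] by (simp add: pcomp_eq_comp_list)

lemma pcomp_append:
  assumes "is_path C n p" "is_path C n' p'" "fst p' = pobj C p n"
  shows "pcomp C (fst p, snd p @ snd p') = cmp C (pcomp C p') (pcomp C p)"
  using arr.comp_list_append path_composable[OF assms(1)] path_composable[OF assms(2)] assms(3)
  by (simp add: pcomp_eq_comp_list)

lemma is_path_singleton: "c \<in> Ar C \<Longrightarrow> is_path C 1 (dom1 C c, [c])"
  using arr_dom_cod by (auto simp: is_path_def)

lemma is_path_Nil: "x \<in> Ob C \<Longrightarrow> is_path C 0 (x, [])"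
  by (auto simp: is_path_def)

lemma is_path_pair: "c \<in> Ar C \<Longrightarrow> c' \<in> Ar C \<Longrightarrow> cod1 C c = dom1 C c' \<Longrightarrow> is_path C 2 (dom1 C c, [c, c'])"
  using arr_dom_cod by (auto simp: is_path_def less_Suc_eq numeral_eq_Suc)

lemma icon_path_singleton:
  assumes "is_path C n p" "a \<in> Cl C" "src2 C a = pcomp C p"
  shows "icon_path C p [0, n] [a] (dom1 C (tgt2 C a), [tgt2 C a])"
  using assms cell_src_tgt[of a] pcomp_arr[of n p] is_pathD(3)[of n p]
  by (auto simp: icon_path_def le_Suc_eq pcomp_def pobj_def)

lemma hseg_map_id2:
  assumes "arr.composable x fs y" "length fs = n"
  shows "hseg C (map (id2 C) fs) x 0 n = id2 C (arr.comp_list x fs)"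
  using horiz_comp_list_id2[OF assms(1)] assms(2) by (simp add: hseg_eq_comp_list slice_full)

lemma hseg_id2_pcomp: "is_path C n p \<Longrightarrow> hseg C (map (id2 C) (snd p)) (fst p) 0 n = id2 C (pcomp C p)"
  using hseg_map_id2[OF path_composable] is_pathD(3) by (simp add: pcomp_eq_comp_list)

lemma hseg_id2_pcomp_append:
  assumes "is_path C n p" "is_path C n' p'" "fst p' = pobj C p n"
  shows "hseg C (map (id2 C) (snd p @ snd p')) (fst p) 0 (n + n') = id2 C (cmp C (pcomp C p') (pcomp C p))"
proof -
  have "arr.composable (fst p) (snd p @ snd p') (pobj C p' n')"
    using arr.composable_append path_composable[OF assms(1)] path_composable[OF assms(2)] assms(3)
    by auto
  then have "hseg C (map (id2 C) (snd p @ snd p')) (fst p) 0 (n + n') = id2 C (pcomp C (fst p, snd p @ snd p'))"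
    using hseg_map_id2 is_pathD(3)[OF assms(1)] is_pathD(3)[OF assms(2)]
    by (simp add: pcomp_eq_comp_list del: map_append)
  then show ?thesis using pcomp_append[OF assms] by simp
qed

lemma icon_pathD:
  assumes pb: "is_path C nb pb" and ic: "icon_path C p xi al pb"
  shows "length al = nb"
    "\<forall>i<nb. al ! i \<in> Cl C \<and> dom1 C (src2 C (al ! i)) = pobj C pb i \<and> cod1 C (src2 C (al ! i)) = pobj C pb (Suc i)"
    "\<forall>i<nb. src2 C (al ! i) = pseg C p (xi ! i) (xi ! Suc i) \<and> tgt2 C (al ! i) = snd pb ! i"
    "\<forall>i\<le>nb. pobj C p (xi ! i) = pobj C pb i"
proof -
  have l: "length (snd pb) = nb" using is_pathD(3)[OF pb] .
  have comp: "al ! i \<in> Cl C \<and> src2 C (al ! i) = pseg C p (xi ! i) (xi ! Suc i) \<and> tgt2 C (al ! i) = snd pb ! i"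
    if "i < nb" for i
  proof -
    have "Suc i \<in> {1..length (snd pb)}" using l that by auto
    then show ?thesis using ic unfolding icon_path_def by (metis diff_Suc_1)
  qed
  show "length al = nb" using ic l by (simp add: icon_path_def)
  show "\<forall>i<nb. src2 C (al ! i) = pseg C p (xi ! i) (xi ! Suc i) \<and> tgt2 C (al ! i) = snd pb ! i"
    using comp by blast
  show "\<forall>i<nb. al ! i \<in> Cl C \<and> dom1 C (src2 C (al ! i)) = pobj C pb i \<and> cod1 C (src2 C (al ! i)) = pobj C pb (Suc i)"
  proof (intro allI impI)
    fix i assume i: "i < nb"
    then have "al ! i \<in> Cl C" "tgt2 C (al ! i) = snd pb ! i" using comp by blast+
    then show "al ! i \<in> Cl C \<and> dom1 C (src2 C (al ! i)) = pobj C pb i \<and> cod1 C (src2 C (al ! i)) = pobj C pb (Suc i)"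
      using cell_src_tgt[of "al ! i"] is_pathD(1)[OF pb] i by simp
  qed
  show "\<forall>i\<le>nb. pobj C p (xi ! i) = pobj C pb i" using ic l by (simp add: icon_path_def)
qed

lemma icon_path_hseg_slice:
  assumes p: "is_path C n p" and pb: "is_path C nb pb" and xi: "is_dmap nb n xi"
    and ic: "icon_path C p xi al pb" and jk: "j \<le> k" "k \<le> nb"
  shows "horiz.composable (pobj C pb j) (slice j k al) (pobj C pb k)"
    "hseg C al (pobj C pb j) j k \<in> Cl C"
    "src2 C (hseg C al (pobj C pb j) j k) = pseg C p (xi ! j) (xi ! k)"
    "tgt2 C (hseg C al (pobj C pb j) j k) = pseg C pb j k"
proof -
  note I = icon_pathD[OF pb ic] and X = dmapD[OF xi]
  show ok: "horiz.composable (pobj C pb j) (slice j k al) (pobj C pb k)"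
    using horiz.composable_slice[of al nb "pobj C pb" j k] I is_pathD(2)[OF pb] jk by auto
  then show "hseg C al (pobj C pb j) j k \<in> Cl C"
    using horiz.comp_list_arr by (simp add: hseg_eq_comp_list)
  note ST = horiz_comp_list_src_tgt[OF ok]
  have srcs: "map (src2 C) al = map (\<lambda>i. arr.comp_list (pobj C p (xi ! i)) (slice (xi ! i) (xi ! Suc i) (snd p))) [0..<nb]"
    by (rule nth_equalityI) (use I in \<open>auto simp: pseg_eq_comp_list\<close>)
  have "xi ! k \<le> n" using X(3) X(4)[rule_format, of k nb] jk by simp
  then have "arr.comp_list (pobj C p (xi ! j))
        (map (\<lambda>i. arr.comp_list (pobj C p (xi ! i)) (slice (xi ! i) (xi ! Suc i) (snd p))) [j..<k])
      = arr.comp_list (pobj C p (xi ! j)) (slice (xi ! j) (xi ! k) (snd p))"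
    using arr.comp_list_subdivision[of "snd p" n "pobj C p" j k "\<lambda>i. xi ! i"] is_pathD[OF p] jk X
    by auto
  then show "src2 C (hseg C al (pobj C pb j) j k) = pseg C p (xi ! j) (xi ! k)"
    using ST I(4) jk by (simp add: hseg_eq_comp_list map_slice srcs slice_map_upt pseg_eq_comp_list)
  have "map (tgt2 C) al = snd pb"
    by (rule nth_equalityI) (use I is_pathD(3)[OF pb] in auto)
  then show "tgt2 C (hseg C al (pobj C pb j) j k) = pseg C pb j k"
    using ST by (simp add: hseg_eq_comp_list map_slice pseg_eq_comp_list)
qed

lemma icon_path_hseg:
  assumes p: "is_path C n p" and pb: "is_path C nb pb" and xi: "is_dmap nb n xi"
    and ic: "icon_path C p xi al pb"
  shows "horiz.composable (fst pb) al (pobj C pb nb)"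
    "hseg C al (fst pb) 0 nb = horiz.comp_list (fst pb) al"
    "hseg C al (fst pb) 0 nb \<in> Cl C"
    "src2 C (hseg C al (fst pb) 0 nb) = pcomp C p"
    "tgt2 C (hseg C al (fst pb) 0 nb) = pcomp C pb"
  using icon_path_hseg_slice[OF assms, of 0 nb] icon_pathD(1)[OF pb ic] is_pathD(3,4)[OF p]
    is_pathD(3,4)[OF pb] dmapD[OF xi]
  by (auto simp: slice_full pcomp_def hseg_eq_comp_list)

text \<open>By the interchange law, applied once for each component of the second icon.\<close>

lemma hseg_icon_vc:
  assumes ps: "is_path C ns ps" and pt: "is_path C nt pt" and pu: "is_path C nu pu"
    and xa: "is_dmap nt ns xa" and ia: "icon_path C ps xa aa pt"
    and xb: "is_dmap nu nt xb" and ib: "icon_path C pt xb ab pu"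
  shows "hseg C (map (\<lambda>i. vc C (ab ! (i - 1)) (hseg C aa (pobj C pt (xb ! (i - 1))) (xb ! (i - 1)) (xb ! i)))
      [1..<Suc nu]) (fst pu) 0 nu
   = vc C (hseg C ab (fst pu) 0 nu) (hseg C aa (fst pt) 0 nt)"
proof -
  define A where "A i = hseg C aa (pobj C pt (xb ! i)) (xb ! i) (xb ! Suc i)" for i
  have shift: "map (\<lambda>i. vc C (ab ! (i - 1)) (hseg C aa (pobj C pt (xb ! (i - 1))) (xb ! (i - 1)) (xb ! i)))
      [1..<Suc nu] = map (\<lambda>i. vc C (ab ! i) (A i)) [0..<nu]"
    by (rule nth_equalityI) (auto simp: A_def nth_upt simp del: upt_Suc)
  note Ia = icon_pathD[OF pt ia] and Ib = icon_pathD[OF pu ib] and Xb = dmapD[OF xb]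
  have x: "pobj C pt (xb ! 0) = fst pu" "pobj C pt (xb ! 0) = fst pt"
    using Ib(4) is_pathD(4)[OF pu] Xb is_pathD(4)[OF pt] by auto
  have "horiz.composable (pobj C pt (xb ! 0)) (map A [0..<nu]) (pobj C pt (xb ! nu))
     \<and> horiz.comp_list (pobj C pt (xb ! 0)) (map A [0..<nu])
       = horiz.comp_list (pobj C pt (xb ! 0)) (slice (xb ! 0) (xb ! nu) aa)"
    unfolding A_def hseg_eq_comp_list
    using horiz.comp_list_subdivision[of aa nt "pobj C pt" 0 nu "\<lambda>i. xb ! i"] Ia(1,2) is_pathD(2)[OF pt] Xb
    by auto
  then have okA: "horiz.composable (fst pu) (map A [0..<nu]) (pobj C pt (xb ! nu))"
    and compA: "horiz.comp_list (fst pu) (map A [0..<nu]) = hseg C aa (fst pt) 0 nt"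
    using x Xb Ia(1) icon_path_hseg(2)[OF ps pt xa ia] by (simp_all add: slice_full)
  have mapB: "map (\<lambda>i. ab ! i) [0..<nu] = ab" using Ib(1) map_nth[of ab] by simp
  have okB: "horiz.composable (fst pu) (map (\<lambda>i. ab ! i) [0..<nu]) (pobj C pu nu)"
    using icon_path_hseg(1)[OF pt pu xb ib] mapB by simp
  have "\<forall>i<nu. A i \<in> Cl C \<and> ab ! i \<in> Cl C \<and> tgt2 C (A i) = src2 C (ab ! i)"
  proof (intro allI impI)
    fix i assume i: "i < nu"
    have "xb ! i \<le> xb ! Suc i" "xb ! Suc i \<le> nt" using Xb i by auto
    then show "A i \<in> Cl C \<and> ab ! i \<in> Cl C \<and> tgt2 C (A i) = src2 C (ab ! i)"
      using icon_path_hseg_slice(2,4)[OF ps pt xa ia] Ib(2,3) i by (auto simp: A_def)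
  qed
  then have "horiz.comp_list (fst pu) (map (\<lambda>i. vc C (ab ! i) (A i)) [0..<nu])
      = vc C (horiz.comp_list (fst pu) (map (\<lambda>i. ab ! i) [0..<nu])) (horiz.comp_list (fst pu) (map A [0..<nu]))"
    using horiz_comp_list_vc okA okB by blast
  then show ?thesis
    using shift compA mapB icon_path_hseg(2)[OF pt pu xb ib] by (simp add: hseg_eq_comp_list slice_full)
qed

lemma hseg_icon_append:
  assumes ps: "is_path C ns ps" and pt: "is_path C nt pt" and xa: "is_dmap nt ns xa"
    and ia: "icon_path C ps xa aa pt"
    and ps': "is_path C ns' ps'" and pt': "is_path C nt' pt'" and xb: "is_dmap nt' ns' xb"
    and ib: "icon_path C ps' xb ab pt'"
    and o: "fst pt' = pobj C pt nt"
  shows "hseg C (aa @ ab) (fst pt) 0 (nt + nt') = hc C (hseg C ab (fst pt') 0 nt') (hseg C aa (fst pt) 0 nt)"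
proof -
  note Ia = icon_path_hseg[OF ps pt xa ia] and Ib = icon_path_hseg[OF ps' pt' xb ib]
  have "hseg C (aa @ ab) (fst pt) 0 (nt + nt') = horiz.comp_list (fst pt) (aa @ ab)"
    using icon_pathD(1)[OF pt ia] icon_pathD(1)[OF pt' ib] by (simp add: hseg_eq_comp_list slice_full)
  also have "\<dots> = hc C (horiz.comp_list (fst pt') ab) (horiz.comp_list (fst pt) aa)"
    using horiz.comp_list_append Ia(1) Ib(1) o by simp
  finally show ?thesis using Ia(2) Ib(2) by simp
qed

lemma hc_id2_assoc:
  assumes "f \<in> Ar C" "g \<in> Ar C" "h \<in> Ar C" "cod1 C f = dom1 C g" "cod1 C g = dom1 C h"
  shows "vc C (id2 C (cmp C h (cmp C g f))) (hc C (id2 C h) (id2 C (cmp C g f)))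
       = vc C (id2 C (cmp C (cmp C h g) f)) (hc C (id2 C (cmp C h g)) (id2 C f))"
proof -
  have gf: "cmp C g f \<in> Ar C" "cod1 C (cmp C g f) = dom1 C h"
    and hg: "cmp C h g \<in> Ar C" "dom1 C (cmp C h g) = cod1 C f"
    using cmp_arr assms by auto
  then have "cmp C h (cmp C g f) \<in> Ar C" using cmp_arr assms by auto
  then show ?thesis using gf hg assms hc_id2 cmp_assoc vc_id2_id2 by simp
qed

lemma hc_id2_idn:
  assumes "f \<in> Ar C"
  shows "vc C (id2 C (cmp C f (idn C (dom1 C f)))) (hc C (id2 C f) (id2 C (idn C (dom1 C f)))) = id2 C f"
    "vc C (id2 C (cmp C (idn C (cod1 C f)) f)) (hc C (id2 C (idn C (cod1 C f))) (id2 C f)) = id2 C f"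
  using hc_id2[of "idn C (dom1 C f)" f] hc_id2[of f "idn C (cod1 C f)"] idn_arr arr_dom_cod assms
    cmp_idn_right cmp_idn_left vc_id2_id2
  by simp_all

text \<open>The source need not be a 2-category: of its axioms only the typing facts X are used.\<close>

lemma strict_functorI:
  assumes X: "\<forall>f\<in>Ar X. dom1 X f \<in> Ob X \<and> cod1 X f \<in> Ob X" "\<forall>a\<in>Cl X. src2 X a \<in> Ar X"
    and ob: "\<forall>x\<in>Ob X. fob F x \<in> Ob C"
    and arr: "\<forall>f\<in>Ar X. far F f \<in> Ar C \<and> dom1 C (far F f) = fob F (dom1 X f) \<and> cod1 C (far F f) = fob F (cod1 X f)"
    and cell: "\<forall>a\<in>Cl X. fcl F a \<in> Cl C \<and> src2 C (fcl F a) = far F (src2 X a) \<and> tgt2 C (fcl F a) = far F (tgt2 X a)"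
    and id2: "\<forall>f\<in>Ar X. fcl F (id2 X f) = id2 C (far F f)"
    and vc: "\<forall>a\<in>Cl X. \<forall>b\<in>Cl X. tgt2 X a = src2 X b \<longrightarrow> fcl F (vc X b a) = vc C (fcl F b) (fcl F a)"
    and idn: "\<forall>x\<in>Ob X. far F (idn X x) = idn C (fob F x)"
    and cmp: "\<forall>f\<in>Ar X. \<forall>g\<in>Ar X. cod1 X f = dom1 X g \<longrightarrow> far F (cmp X g f) = cmp C (far F g) (far F f)"
    and hc: "\<forall>a\<in>Cl X. \<forall>b\<in>Cl X. cod1 X (src2 X a) = dom1 X (src2 X b) \<longrightarrow>
      fcl F (hc X b a) = hc C (fcl F b) (fcl F a)"
    and funit: "\<And>x. funit F x = id2 C (idn C (fob F x))"
    and fcomp: "\<And>f g. fcomp F g f = id2 C (cmp C (far F g) (far F f))"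
  shows "strict_functor X C F"
proof -
  have hc_natural: "vc C (fcomp F (tgt2 X b) (tgt2 X a)) (hc C (fcl F b) (fcl F a))
      = vc C (fcl F (hc X b a)) (fcomp F (src2 X b) (src2 X a))"
    if "a \<in> Cl X" "b \<in> Cl X" "cod1 X (src2 X a) = dom1 X (src2 X b)" for a b
  proof -
    have "cod1 C (src2 C (fcl F a)) = dom1 C (src2 C (fcl F b))"
      using that X(2) cell arr by auto
    then have "hc C (fcl F b) (fcl F a) \<in> Cl C"
      "src2 C (hc C (fcl F b) (fcl F a)) = cmp C (far F (src2 X b)) (far F (src2 X a))"
      "tgt2 C (hc C (fcl F b) (fcl F a)) = cmp C (far F (tgt2 X b)) (far F (tgt2 X a))"
      using hc_cell[of "fcl F a" "fcl F b"] that cell by auto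
    then show ?thesis using hc that vc_id2_left vc_id2_right fcomp by metis
  qed
  have comp_cell: "fcomp F g f \<in> Cl C \<and> src2 C (fcomp F g f) = cmp C (far F g) (far F f) \<and>
      tgt2 C (fcomp F g f) = far F (cmp X g f)"
    if "f \<in> Ar X" "g \<in> Ar X" "cod1 X f = dom1 X g" for f g
    using that arr cmp cmp_arr[of "far F f" "far F g"] id2_cell fcomp by auto
  have assoc: "vc C (fcomp F h (cmp X g f)) (hc C (id2 C (far F h)) (fcomp F g f))
      = vc C (fcomp F (cmp X h g) f) (hc C (fcomp F h g) (id2 C (far F f)))"
    if "f \<in> Ar X" "g \<in> Ar X" "h \<in> Ar X" "cod1 X f = dom1 X g" "cod1 X g = dom1 X h" for f g h
    using that arr cmp fcomp hc_id2_assoc[of "far F f" "far F g" "far F h"] by simp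
  have units: "vc C (fcomp F f (idn X (dom1 X f))) (hc C (id2 C (far F f)) (funit F (dom1 X f))) = id2 C (far F f)
      \<and> vc C (fcomp F (idn X (cod1 X f)) f) (hc C (funit F (cod1 X f)) (id2 C (far F f))) = id2 C (far F f)"
    if "f \<in> Ar X" for f
    using that X(1) arr idn funit fcomp hc_id2_idn[of "far F f"] by simp
  show ?thesis
    unfolding strict_functor_def lax_functor_def
    using ob arr cell id2 vc idn cmp funit fcomp hc_natural comp_cell assoc units idn_arr id2_cell
    by auto
qed

end

section \<open>The functor L and the lax functor R\<close>

lemma sarr_simps [simp]:
  "a_n (n, p, r, m, q, s) = n" "a_p (n, p, r, m, q, s) = p" "a_r (n, p, r, m, q, s) = r"
  "a_m (n, p, r, m, q, s) = m" "a_q (n, p, r, m, q, s) = q" "a_s (n, p, r, m, q, s) = s"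
  by (simp_all add: a_n_def a_p_def a_r_def a_m_def a_q_def a_s_def)

lemma scell_simps [simp]:
  "c_src (f, g, x, al, y, be) = f" "c_tgt (f, g, x, al, y, be) = g" "c_xi (f, g, x, al, y, be) = x"
  "c_al (f, g, x, al, y, be) = al" "c_rho (f, g, x, al, y, be) = y" "c_be (f, g, x, al, y, be) = be"
  by (simp_all add: c_src_def c_tgt_def c_xi_def c_al_def c_rho_def c_be_def)

lemma prodcat_simps [simp]:
  "Ob (prodcat C D) = Ob C \<times> Ob D" "Ar (prodcat C D) = Ar C \<times> Ar D" "Cl (prodcat C D) = Cl C \<times> Cl D"
  "dom1 (prodcat C D) (c, d) = (dom1 C c, dom1 D d)" "cod1 (prodcat C D) (c, d) = (cod1 C c, cod1 D d)"
  "idn (prodcat C D) (x, y) = (idn C x, idn D y)"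
  "cmp (prodcat C D) (c', d') (c, d) = (cmp C c' c, cmp D d' d)"
  "src2 (prodcat C D) (a, b) = (src2 C a, src2 D b)" "tgt2 (prodcat C D) (a, b) = (tgt2 C a, tgt2 D b)"
  "id2 (prodcat C D) (c, d) = (id2 C c, id2 D d)"
  "vc (prodcat C D) (a', b') (a, b) = (vc C a' a, vc D b' b)"
  "hc (prodcat C D) (a', b') (a, b) = (hc C a' a, hc D b' b)"
  by (simp_all add: prodcat_def)

lemma simcat_simps [simp]:
  "Ob (simcat C D) = Ob C \<times> Ob D" "Ar (simcat C D) = sim_arr C D" "Cl (simcat C D) = sim_cell C D"
  "dom1 (simcat C D) = sim_dom C D" "cod1 (simcat C D) = sim_cod C D" "idn (simcat C D) = sim_idn"
  "cmp (simcat C D) = sim_cmp" "src2 (simcat C D) = c_src" "tgt2 (simcat C D) = c_tgt"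
  "id2 (simcat C D) = sim_id2 C D" "vc (simcat C D) = sim_vc C D" "hc (simcat C D) = sim_hc"
  by (simp_all add: simcat_def)

lemma sim_cmp_simps [simp]:
  "a_n (sim_cmp g f) = a_n f + a_n g" "a_p (sim_cmp g f) = (fst (a_p f), snd (a_p f) @ snd (a_p g))"
  "a_m (sim_cmp g f) = a_m f + a_m g" "a_q (sim_cmp g f) = (fst (a_q f), snd (a_q f) @ snd (a_q g))"
  by (simp_all add: sim_cmp_def)

lemma sim_idn_simps [simp]:
  "a_n (sim_idn x) = 0" "a_p (sim_idn x) = (fst x, [])" "a_m (sim_idn x) = 0" "a_q (sim_idn x) = (snd x, [])"
  by (simp_all add: sim_idn_def)

lemma sim_hc_simps [simp]:
  "c_src (sim_hc b a) = sim_cmp (c_src b) (c_src a)" "c_tgt (sim_hc b a) = sim_cmp (c_tgt b) (c_tgt a)"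
  "c_al (sim_hc b a) = c_al a @ c_al b" "c_be (sim_hc b a) = c_be a @ c_be b"
  by (simp_all add: sim_hc_def)

lemma Lfun_simps [simp]:
  "fob (Lfun C D) = id"
  "far (Lfun C D) f = (pcomp C (a_p f), pcomp D (a_q f))"
  "fcl (Lfun C D) a = (hseg C (c_al a) (fst (a_p (c_tgt a))) 0 (a_n (c_tgt a)),
                      hseg D (c_be a) (fst (a_q (c_tgt a))) 0 (a_m (c_tgt a)))"
  "funit (Lfun C D) x = (id2 C (idn C (fst x)), id2 D (idn D (snd x)))"
  "fcomp (Lfun C D) g f = (id2 C (cmp C (pcomp C (a_p g)) (pcomp C (a_p f))),
                          id2 D (cmp D (pcomp D (a_q g)) (pcomp D (a_q f))))"
  by (simp_all add: Lfun_def prodcat_def split: prod.splits)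

lemma pcomp_Nil [simp]: "pcomp C (x, []) = idn C x"
  by (simp add: pcomp_def pseg_def pobj_def)

lemma sim_arrD:
  "f \<in> sim_arr C D \<Longrightarrow> is_path C (a_n f) (a_p f) \<and> is_path D (a_m f) (a_q f) \<and>
    shuffle (a_n f) (a_m f) (a_r f) (a_s f)"
  by (simp add: sim_arr_def)

lemma sim_cellD:
  "a \<in> sim_cell C D \<Longrightarrow>
   is_path C (a_n (c_src a)) (a_p (c_src a)) \<and> is_path D (a_m (c_src a)) (a_q (c_src a)) \<and>
   is_path C (a_n (c_tgt a)) (a_p (c_tgt a)) \<and> is_path D (a_m (c_tgt a)) (a_q (c_tgt a)) \<and>
   is_dmap (a_n (c_tgt a)) (a_n (c_src a)) (c_xi a) \<and> is_dmap (a_m (c_tgt a)) (a_m (c_src a)) (c_rho a) \<and>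
   icon_path C (a_p (c_src a)) (c_xi a) (c_al a) (a_p (c_tgt a)) \<and>
   icon_path D (a_q (c_src a)) (c_rho a) (c_be a) (a_q (c_tgt a)) \<and>
   sim_dom C D (c_src a) = sim_dom C D (c_tgt a) \<and> sim_cod C D (c_src a) = sim_cod C D (c_tgt a) \<and>
   c_src a \<in> sim_arr C D \<and> c_tgt a \<in> sim_arr C D"
  by (simp add: sim_cell_def sim_arr_def)

lemma Rarr_simps [simp]:
  "a_n (Rarr C D (c, d)) = 1" "a_p (Rarr C D (c, d)) = (dom1 C c, [c])" "a_r (Rarr C D (c, d)) = [0, 0, 1]"
  "a_m (Rarr C D (c, d)) = 1" "a_q (Rarr C D (c, d)) = (dom1 D d, [d])" "a_s (Rarr C D (c, d)) = [0, 1, 1]"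
  by (simp_all add: Rarr_def)

lemma Rfun_simps [simp]:
  "fob (Rfun C D) z = z"
  "far (Rfun C D) f = Rarr C D f"
  "fcl (Rfun C D) (a, b) = (Rarr C D (src2 C a, src2 D b), Rarr C D (tgt2 C a, tgt2 D b), [0, 1], [a], [0, 1], [b])"
  "funit (Rfun C D) (x, y) = (sim_idn (x, y), Rarr C D (idn C x, idn D y),
     [0, 0], [id2 C (idn C x)], [0, 0], [id2 D (idn D y)])"
  "fcomp (Rfun C D) (c', d') (c, d) = (sim_cmp (Rarr C D (c', d')) (Rarr C D (c, d)), Rarr C D (cmp C c' c, cmp D d' d),
     [0, 2], [id2 C (cmp C c' c)], [0, 2], [id2 D (cmp D d' d)])"
  by (simp_all add: Rfun_def)

lemma sim_cmp_Rarr: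
  "sim_cmp (Rarr C D (c', d')) (Rarr C D (c, d))
   = (2, (dom1 C c, [c, c']), [0, 0, 1, 1, 2], 2, (dom1 D d, [d, d']), [0, 1, 1, 2, 2])"
  by (simp add: sim_cmp_def Rarr_def)

lemma lcomp_simps [simp]:
  "fob (lcomp Z G F) x = fob G (fob F x)" "far (lcomp Z G F) f = far G (far F f)"
  "fcl (lcomp Z G F) a = fcl G (fcl F a)"
  "funit (lcomp Z G F) x = vc Z (fcl G (funit F x)) (funit G (fob F x))"
  "fcomp (lcomp Z G F) g f = vc Z (fcl G (fcomp F g f)) (fcomp G (far F g) (far F f))"
  by (simp_all add: lcomp_def)

lemma lid_simps [simp]:
  "fob (lid X) x = x" "far (lid X) f = f" "fcl (lid X) a = a" "funit (lid X) x = id2 X (idn X x)"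
  "fcomp (lid X) g f = id2 X (cmp X g f)"
  by (simp_all add: lid_def)

lemma pobj_simps [simp]: "pobj C (x, fs) 0 = x" "pobj C (x, fs) (Suc i) = cod1 C (fs ! i)"
  by (simp_all add: pobj_def)

lemma pcomp_singleton [simp]: "pcomp C (x, [f]) = cmp C f (idn C x)"
  by (simp add: pcomp_def pseg_def)

lemma pcomp_pair [simp]: "pcomp C (x, [f, g]) = cmp C g (cmp C f (idn C x))"
  by (simp add: pcomp_def pseg_def)

lemma hseg_Nil [simp]: "hseg C as x 0 0 = id2 C (idn C x)"
  by (simp add: hseg_def)

lemma hseg_singleton [simp]: "hseg C [a] x 0 (Suc 0) = hc C a (id2 C (idn C x))"
  by (simp add: hseg_def)

lemma hseg_pair [simp]: "hseg C [a, b] x 0 (Suc (Suc 0)) = hc C b (hc C a (id2 C (idn C x)))"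
  by (simp add: hseg_def)

lemma Min_preim_le_Max_preim:
  assumes "a < length r" "r ! a = v" "b < length s" "s ! b = w" "a \<le> b"
  shows "Min (preim r v) \<le> Max (preim s w)"
proof -
  have fin: "finite (preim r v)" "finite (preim s w)" by (simp_all add: preim_def)
  have "a \<in> preim r v" "b \<in> preim s w" using assms by (auto simp: preim_def)
  then show ?thesis using Min_le[OF fin(1)] Max_ge[OF fin(2)] assms(5) by (meson le_trans)
qed

text \<open>The compatibility condition for a 2-cell into R(c,d) = (1,(c),[0,0,1];1,(d),[0,1,1]) with
  xi = [0,n] and rho = [0,m]: 0 lies in the preimage of 0 under r, and n + m in the preimages of n
  under r and of m under s.\<close>

lemma shuffle_Rarr_condition:
  assumes "shuffle n m r s"
  shows "\<forall>i\<le>1 + 1. Min (preim r ([0, n] ! ([0, 0, 1] ! i))) \<le> Max (preim s ([0, m] ! ([0, 1, 1] ! i)))"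
proof (intro allI impI)
  fix i :: nat assume "i \<le> 1 + 1"
  then consider "i = 0" | "i = 1" | "i = 2" by linarith
  moreover have "length r = Suc (n + m)" "r ! 0 = 0" "r ! (n + m) = n"
    "length s = Suc (n + m)" "s ! 0 = 0" "s ! (n + m) = m"
    using assms by (auto simp: shuffle_def is_dmap_def)
  ultimately show "Min (preim r ([0, n] ! ([0, 0, 1] ! i))) \<le> Max (preim s ([0, m] ! ([0, 1, 1] ! i)))"
    by cases (auto intro: Min_preim_le_Max_preim[where a = 0 and b = 0]
      Min_preim_le_Max_preim[where a = 0 and b = "n + m"] Min_preim_le_Max_preim[where a = "n + m" and b = "n + m"])
qed

locale two_category_pair = C: two_category C + D: two_category D
  for C :: "('o1,'a1,'b1) tcat" and D :: "('o2,'a2,'b2) tcat"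
begin

sublocale P: two_category "prodcat C D"
proof
  show "twocat (prodcat C D)"
    unfolding twocat_def
    by (auto simp: C.arr_dom_cod D.arr_dom_cod C.idn_arr D.idn_arr C.cmp_arr D.cmp_arr
      C.cmp_idn_right D.cmp_idn_right C.cmp_idn_left D.cmp_idn_left C.cmp_assoc D.cmp_assoc
      C.cell_src_tgt D.cell_src_tgt C.id2_cell D.id2_cell C.vc_cell D.vc_cell
      C.vc_id2_right D.vc_id2_right C.vc_id2_left D.vc_id2_left C.vc_assoc D.vc_assoc
      C.hc_cell D.hc_cell C.hc_assoc D.hc_assoc C.hc_id2 D.hc_id2 C.interchange D.interchange
      C.hc_id2_idn_right' D.hc_id2_idn_right' C.hc_id2_idn_left' D.hc_id2_idn_left')
qed

abbreviation "S \<equiv> simcat C D"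
abbreviation "P \<equiv> prodcat C D"
abbreviation "L \<equiv> Lfun C D"
abbreviation "R \<equiv> Rfun C D"

lemma sim_cod_eq_dom:
  "sim_cod C D f = sim_dom C D g \<Longrightarrow>
   fst (a_p g) = pobj C (a_p f) (a_n f) \<and> fst (a_q g) = pobj D (a_q f) (a_m f)"
  by (simp add: sim_cod_def sim_dom_def)

lemma Lfun_arr:
  "f \<in> Ar S \<Longrightarrow> far L f \<in> Ar P \<and> dom1 P (far L f) = fob L (dom1 S f) \<and> cod1 P (far L f) = fob L (cod1 S f)"
  using C.pcomp_arr[of "a_n f" "a_p f"] D.pcomp_arr[of "a_m f" "a_q f"] sim_arrD[of f C D]
  by (simp add: sim_dom_def sim_cod_def)

lemma Lfun_cell:
  assumes "a \<in> Cl S"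
  shows "fcl L a \<in> Cl P \<and> src2 P (fcl L a) = far L (src2 S a) \<and> tgt2 P (fcl L a) = far L (tgt2 S a)"
proof -
  note Sa = sim_cellD[of a C D]
  show ?thesis
    using C.icon_path_hseg(3-5)[of "a_n (c_src a)" "a_p (c_src a)" "a_n (c_tgt a)" "a_p (c_tgt a)" "c_xi a" "c_al a"]
      D.icon_path_hseg(3-5)[of "a_m (c_src a)" "a_q (c_src a)" "a_m (c_tgt a)" "a_q (c_tgt a)" "c_rho a" "c_be a"]
      Sa assms
    by simp
qed

lemma Lfun_id2: "f \<in> Ar S \<Longrightarrow> fcl L (id2 S f) = id2 P (far L f)"
  using C.hseg_id2_pcomp[of "a_n f" "a_p f"] D.hseg_id2_pcomp[of "a_m f" "a_q f"] sim_arrD[of f C D]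
  by (simp add: sim_id2_def)

lemma Lfun_vc:
  assumes a: "a \<in> Cl S" and b: "b \<in> Cl S" and ab: "tgt2 S a = src2 S b"
  shows "fcl L (vc S b a) = vc P (fcl L b) (fcl L a)"
proof -
  have "a \<in> sim_cell C D" "b \<in> sim_cell C D" "c_tgt a = c_src b" using a b ab by simp_all
  note Sa = sim_cellD[OF this(1)] and Sb = sim_cellD[OF this(2)] and ab' = this(3)
  show ?thesis
    using C.hseg_icon_vc[of "a_n (c_src a)" "a_p (c_src a)" "a_n (c_tgt a)" "a_p (c_tgt a)" "a_n (c_tgt b)"
        "a_p (c_tgt b)" "c_xi a" "c_al a" "c_xi b" "c_al b"]
      D.hseg_icon_vc[of "a_m (c_src a)" "a_q (c_src a)" "a_m (c_tgt a)" "a_q (c_tgt a)" "a_m (c_tgt b)"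
        "a_q (c_tgt b)" "c_rho a" "c_be a" "c_rho b" "c_be b"]
      Sa Sb ab'
    by (simp add: sim_vc_def)
qed

lemma Lfun_sim_cmp:
  assumes "f \<in> Ar S" "g \<in> Ar S" "cod1 S f = dom1 S g"
  shows "far L (cmp S g f) = cmp P (far L g) (far L f)"
  using C.pcomp_append[of "a_n f" "a_p f" "a_n g" "a_p g"] D.pcomp_append[of "a_m f" "a_q f" "a_m g" "a_q g"]
    sim_arrD[of f C D] sim_arrD[of g C D] sim_cod_eq_dom[of f g] assms
  by simp

lemma Lfun_hc:
  assumes a: "a \<in> Cl S" and b: "b \<in> Cl S" and ab: "cod1 S (src2 S a) = dom1 S (src2 S b)"
  shows "fcl L (hc S b a) = hc P (fcl L b) (fcl L a)"
proof -
  have "a \<in> sim_cell C D" "b \<in> sim_cell C D" using a b by simp_all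
  note Sa = sim_cellD[OF this(1)] and Sb = sim_cellD[OF this(2)]
  have "sim_cod C D (c_tgt a) = sim_dom C D (c_tgt b)" using Sa Sb ab by simp
  then have "fst (a_p (c_tgt b)) = pobj C (a_p (c_tgt a)) (a_n (c_tgt a))"
    "fst (a_q (c_tgt b)) = pobj D (a_q (c_tgt a)) (a_m (c_tgt a))"
    using sim_cod_eq_dom by blast+
  then show ?thesis
    using C.hseg_icon_append[of "a_n (c_src a)" "a_p (c_src a)" "a_n (c_tgt a)" "a_p (c_tgt a)" "c_xi a" "c_al a"
        "a_n (c_src b)" "a_p (c_src b)" "a_n (c_tgt b)" "a_p (c_tgt b)" "c_xi b" "c_al b"]
      D.hseg_icon_append[of "a_m (c_src a)" "a_q (c_src a)" "a_m (c_tgt a)" "a_q (c_tgt a)" "c_rho a" "c_be a"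
        "a_m (c_src b)" "a_q (c_src b)" "a_m (c_tgt b)" "a_q (c_tgt b)" "c_rho b" "c_be b"]
      Sa Sb
    by simp
qed

lemma strict_functor_Lfun: "strict_functor S P L"
proof (rule P.strict_functorI)
  show "\<forall>f\<in>Ar S. dom1 S f \<in> Ob S \<and> cod1 S f \<in> Ob S"
    using sim_arrD C.is_pathD(2,4) D.is_pathD(2,4) by (fastforce simp: sim_dom_def sim_cod_def)
  show "\<forall>a\<in>Cl S. src2 S a \<in> Ar S" using sim_cellD by fastforce
  show "\<forall>x\<in>Ob S. fob L x \<in> Ob P" by simp
  show "\<forall>x\<in>Ob S. far L (idn S x) = idn P (fob L x)" by (simp add: sim_idn_def)
  show "funit L x = id2 P (idn P (fob L x))" for x by (cases x) simp
  show "fcomp L g f = id2 P (cmp P (far L g) (far L f))" for f g by simp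
qed (use Lfun_arr Lfun_cell Lfun_id2 Lfun_vc Lfun_sim_cmp Lfun_hc in blast)+

lemma Rarr_arr:
  "c \<in> Ar C \<Longrightarrow> d \<in> Ar D \<Longrightarrow> Rarr C D (c, d) \<in> sim_arr C D"
  using C.is_path_singleton D.is_path_singleton
  by (auto simp: sim_arr_def shuffle_def is_dmap_def less_Suc_eq)

lemma sim_cell_into_Rarr:
  assumes f: "f \<in> sim_arr C D"
    and a: "a \<in> Cl C" "src2 C a = pcomp C (a_p f)" and b: "b \<in> Cl D" "src2 D b = pcomp D (a_q f)"
  shows "(f, Rarr C D (tgt2 C a, tgt2 D b), [0, a_n f], [a], [0, a_m f], [b]) \<in> sim_cell C D"
proof -
  note F = sim_arrD[OF f]
  have "tgt2 C a \<in> Ar C" "tgt2 D b \<in> Ar D" using a b C.cell_src_tgt D.cell_src_tgt by blast+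
  moreover have "sim_dom C D f = (dom1 C (tgt2 C a), dom1 D (tgt2 D b))"
    "sim_cod C D f = (cod1 C (tgt2 C a), cod1 D (tgt2 D b))"
    using a b C.cell_src_tgt[of a] D.cell_src_tgt[of b] C.pcomp_arr[of "a_n f" "a_p f"]
      D.pcomp_arr[of "a_m f" "a_q f"] F
    by (auto simp: sim_dom_def sim_cod_def)
  ultimately show ?thesis
    using f Rarr_arr shuffle_Rarr_condition C.icon_path_singleton[OF _ a] D.icon_path_singleton[OF _ b] F
    by (simp add: sim_cell_def is_dmap_def sim_dom_def sim_cod_def)
qed

lemma Rfun_arr:
  "f \<in> Ar P \<Longrightarrow> far R f \<in> Ar S \<and> dom1 S (far R f) = fob R (dom1 P f) \<and> cod1 S (far R f) = fob R (cod1 P f)"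
  using Rarr_arr by (cases f) (simp add: sim_dom_def sim_cod_def)

lemma Rfun_cell:
  assumes "a \<in> Cl P"
  shows "fcl R a \<in> Cl S \<and> src2 S (fcl R a) = far R (src2 P a) \<and> tgt2 S (fcl R a) = far R (tgt2 P a)"
proof (cases a)
  case (Pair g d)
  then have g: "g \<in> Cl C" and d: "d \<in> Cl D" using assms by simp_all
  then have "src2 C g \<in> Ar C" "src2 D d \<in> Ar D" using C.cell_src_tgt D.cell_src_tgt by blast+
  then have "Rarr C D (src2 C g, src2 D d) \<in> sim_arr C D"
    "src2 C g = pcomp C (a_p (Rarr C D (src2 C g, src2 D d)))"
    "src2 D d = pcomp D (a_q (Rarr C D (src2 C g, src2 D d)))"
    using Rarr_arr C.cmp_idn_right D.cmp_idn_right by simp_all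
  from sim_cell_into_Rarr[OF this(1) g this(2) d this(3)] show ?thesis
    using Pair by simp
qed

lemma Rfun_id2: "f \<in> Ar P \<Longrightarrow> fcl R (id2 P f) = id2 S (far R f)"
  using C.id2_cell D.id2_cell by (cases f) (simp add: sim_id2_def)

lemma Rfun_vc:
  assumes "a \<in> Cl P" "b \<in> Cl P" "tgt2 P a = src2 P b"
  shows "fcl R (vc P b a) = vc S (fcl R b) (fcl R a)"
proof -
  obtain g d g' d' where ab: "a = (g, d)" "b = (g', d')" by fastforce
  then have g: "g \<in> Cl C" "g' \<in> Cl C" "tgt2 C g = src2 C g'"
    and d: "d \<in> Cl D" "d' \<in> Cl D" "tgt2 D d = src2 D d'"
    using assms by simp_all
  show ?thesis
    using ab C.vc_cell[OF g] D.vc_cell[OF d] C.hc_id2_idn_right'[OF g(1)] D.hc_id2_idn_right'[OF d(1)]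
    by (simp add: sim_vc_def)
qed

lemma Rfun_unit:
  assumes "x \<in> Ob P"
  shows "funit R x \<in> Cl S \<and> src2 S (funit R x) = idn S (fob R x) \<and> tgt2 S (funit R x) = far R (idn P x)"
proof (cases x)
  case (Pair y z)
  then have "y \<in> Ob C" "z \<in> Ob D" using assms by simp_all
  then have "sim_idn x \<in> sim_arr C D"
    "id2 C (idn C y) \<in> Cl C" "src2 C (id2 C (idn C y)) = pcomp C (a_p (sim_idn x))"
    "id2 D (idn D z) \<in> Cl D" "src2 D (id2 D (idn D z)) = pcomp D (a_q (sim_idn x))"
    using Pair C.is_path_Nil D.is_path_Nil C.idn_arr D.idn_arr C.id2_cell D.id2_cell
    by (simp_all add: sim_arr_def sim_idn_def shuffle_def is_dmap_def)
  from sim_cell_into_Rarr[OF this] show ?thesis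
    using Pair C.idn_arr D.idn_arr C.id2_cell D.id2_cell \<open>y \<in> Ob C\<close> \<open>z \<in> Ob D\<close> by simp
qed

lemma Rfun_comp:
  assumes "f \<in> Ar P" "g \<in> Ar P" "cod1 P f = dom1 P g"
  shows "fcomp R g f \<in> Cl S \<and> src2 S (fcomp R g f) = cmp S (far R g) (far R f) \<and>
    tgt2 S (fcomp R g f) = far R (cmp P g f)"
proof -
  obtain c d c' d' where fg: "f = (c, d)" "g = (c', d')" by fastforce
  then have c: "c \<in> Ar C" "c' \<in> Ar C" "cod1 C c = dom1 C c'" and d: "d \<in> Ar D" "d' \<in> Ar D" "cod1 D d = dom1 D d'"
    using assms by simp_all
  let ?h = "sim_cmp (Rarr C D (c', d')) (Rarr C D (c, d))"
  have h: "?h \<in> sim_arr C D"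
    using C.is_path_pair[OF c] D.is_path_pair[OF d]
    by (simp add: sim_arr_def sim_cmp_Rarr shuffle_def is_dmap_def less_Suc_eq numeral_eq_Suc)
  have cells: "id2 C (cmp C c' c) \<in> Cl C" "src2 C (id2 C (cmp C c' c)) = pcomp C (a_p ?h)"
    "id2 D (cmp D d' d) \<in> Cl D" "src2 D (id2 D (cmp D d' d)) = pcomp D (a_q ?h)"
    using C.cmp_arr[OF c] D.cmp_arr[OF d] C.id2_cell D.id2_cell C.cmp_idn_right[OF c(1)] D.cmp_idn_right[OF d(1)]
    by (simp_all add: sim_cmp_Rarr)
  show ?thesis
    using sim_cell_into_Rarr[OF h cells] fg C.cmp_arr[OF c] D.cmp_arr[OF d] C.id2_cell D.id2_cell
    by (simp add: sim_cmp_Rarr)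
qed

lemma Rfun_hc:
  assumes "a \<in> Cl P" "b \<in> Cl P" "cod1 P (src2 P a) = dom1 P (src2 P b)"
  shows "vc S (fcomp R (tgt2 P b) (tgt2 P a)) (hc S (fcl R b) (fcl R a))
       = vc S (fcl R (hc P b a)) (fcomp R (src2 P b) (src2 P a))"
proof -
  obtain g d g' d' where ab: "a = (g, d)" "b = (g', d')" by fastforce
  then have g: "g \<in> Cl C" "g' \<in> Cl C" "cod1 C (src2 C g) = dom1 C (src2 C g')"
    and d: "d \<in> Cl D" "d' \<in> Cl D" "cod1 D (src2 D d) = dom1 D (src2 D d')"
    using assms by simp_all
  note hcC = C.hc_cell[OF g] and hcD = D.hc_cell[OF d]
  have src: "cmp C (src2 C g') (src2 C g) \<in> Ar C" "dom1 C (cmp C (src2 C g') (src2 C g)) = dom1 C (src2 C g)"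
    "cmp D (src2 D d') (src2 D d) \<in> Ar D" "dom1 D (cmp D (src2 D d') (src2 D d)) = dom1 D (src2 D d)"
    using C.cmp_arr D.cmp_arr C.cell_src_tgt[OF g(1)] C.cell_src_tgt[OF g(2)] g(3)
      D.cell_src_tgt[OF d(1)] D.cell_src_tgt[OF d(2)] d(3)
    by auto
  show ?thesis
    using ab hcC hcD src C.cell_src_tgt[OF g(1)] C.cell_src_tgt[OF g(2)] D.cell_src_tgt[OF d(1)] D.cell_src_tgt[OF d(2)]
      C.hc_id2_idn_right'[OF g(1)] D.hc_id2_idn_right'[OF d(1)]
      C.hc_id2_id2_idn D.hc_id2_id2_idn
      C.vc_id2_left[of "hc C g' g"] C.vc_id2_right[of "hc C g' g"]
      D.vc_id2_left[of "hc D d' d"] D.vc_id2_right[of "hc D d' d"]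
    by (simp add: sim_vc_def sim_hc_def sim_cmp_Rarr numeral_2_eq_2)
qed

lemma Rfun_assoc:
  assumes "f \<in> Ar P" "g \<in> Ar P" "h \<in> Ar P" "cod1 P f = dom1 P g" "cod1 P g = dom1 P h"
  shows "vc S (fcomp R h (cmp P g f)) (hc S (id2 S (far R h)) (fcomp R g f))
       = vc S (fcomp R (cmp P h g) f) (hc S (fcomp R h g) (id2 S (far R f)))"
proof -
  obtain c d c' d' c'' d'' where fgh: "f = (c, d)" "g = (c', d')" "h = (c'', d'')" by (metis surj_pair)
  then have c: "c \<in> Ar C" "c' \<in> Ar C" "c'' \<in> Ar C" "cod1 C c = dom1 C c'" "cod1 C c' = dom1 C c''"
    and d: "d \<in> Ar D" "d' \<in> Ar D" "d'' \<in> Ar D" "cod1 D d = dom1 D d'" "cod1 D d' = dom1 D d''"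
    using assms by simp_all
  have C1: "cmp C c' c \<in> Ar C" "dom1 C (cmp C c' c) = dom1 C c" "cod1 C (cmp C c' c) = dom1 C c''"
    and C2: "cmp C c'' c' \<in> Ar C" "dom1 C (cmp C c'' c') = cod1 C c"
    using C.cmp_arr c by auto
  have D1: "cmp D d' d \<in> Ar D" "dom1 D (cmp D d' d) = dom1 D d" "cod1 D (cmp D d' d) = dom1 D d''"
    and D2: "cmp D d'' d' \<in> Ar D" "dom1 D (cmp D d'' d') = cod1 D d"
    using D.cmp_arr d by auto
  have C3: "cmp C c'' (cmp C c' c) \<in> Ar C" and D3: "cmp D d'' (cmp D d' d) \<in> Ar D"
    using C.cmp_arr C1 c D.cmp_arr D1 d by auto
  show ?thesis
    using fgh C1 C2 C3 D1 D2 D3 c d C.cmp_assoc[OF c] D.cmp_assoc[OF d]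
      C.hc_id2_id2_idn C.hc_id2 D.hc_id2_id2_idn D.hc_id2 C.vc_id2_id2 D.vc_id2_id2
    by (simp add: sim_vc_def sim_hc_def sim_id2_def sim_cmp_def Rarr_def numeral_eq_Suc)
qed

lemma Rfun_units:
  assumes "f \<in> Ar P"
  shows "vc S (fcomp R f (idn P (dom1 P f))) (hc S (id2 S (far R f)) (funit R (dom1 P f))) = id2 S (far R f)
    \<and> vc S (fcomp R (idn P (cod1 P f)) f) (hc S (funit R (cod1 P f)) (id2 S (far R f))) = id2 S (far R f)"
proof -
  obtain c d where f: "f = (c, d)" by fastforce
  then have c: "c \<in> Ar C" and d: "d \<in> Ar D" using assms by simp_all
  then have "dom1 C c \<in> Ob C" "cod1 C c \<in> Ob C" "dom1 D d \<in> Ob D" "cod1 D d \<in> Ob D"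
    using C.arr_dom_cod D.arr_dom_cod by auto
  then show ?thesis
    using f c d C.idn_arr D.idn_arr C.cmp_idn_right C.cmp_idn_left D.cmp_idn_right D.cmp_idn_left
      C.hc_id2_id2_idn D.hc_id2_id2_idn C.hc_id2 D.hc_id2 C.vc_id2_id2 D.vc_id2_id2 C.cmp_idn_idn D.cmp_idn_idn
    by (simp add: sim_vc_def sim_hc_def sim_id2_def sim_idn_def sim_cmp_def Rarr_def numeral_eq_Suc)
qed

lemma lax_functor_Rfun: "lax_functor P S R"
  unfolding lax_functor_def
  using Rfun_arr Rfun_cell Rfun_id2 Rfun_vc Rfun_unit Rfun_comp Rfun_hc Rfun_assoc Rfun_units
  by simp

lemma Lfun_Rfun_arr: "f \<in> Ar P \<Longrightarrow> far L (far R f) = f"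
  using C.cmp_idn_right D.cmp_idn_right by (cases f) simp

lemma Lfun_Rfun_cell: "a \<in> Cl P \<Longrightarrow> fcl L (fcl R a) = a"
  using C.hc_id2_idn_right' D.hc_id2_idn_right' by (cases a) simp

lemma Lfun_Rfun_unit: "x \<in> Ob P \<Longrightarrow> funit (lcomp P L R) x = funit (lid P) x"
  using C.idn_arr D.idn_arr C.hc_id2_id2_idn D.hc_id2_id2_idn C.vc_id2_id2 D.vc_id2_id2
  by (cases x) simp

lemma Lfun_Rfun_comp:
  assumes "f \<in> Ar P" "g \<in> Ar P" "cod1 P f = dom1 P g"
  shows "fcomp (lcomp P L R) g f = fcomp (lid P) g f"
proof -
  obtain c d c' d' where fg: "f = (c, d)" "g = (c', d')" by fastforce
  then have c: "c \<in> Ar C" "c' \<in> Ar C" "cod1 C c = dom1 C c'" and d: "d \<in> Ar D" "d' \<in> Ar D" "cod1 D d = dom1 D d'"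
    using assms by simp_all
  show ?thesis
    using fg C.cmp_arr[OF c] D.cmp_arr[OF d] C.id2_cell D.id2_cell C.hc_id2_id2_idn D.hc_id2_id2_idn
      C.vc_id2_id2 D.vc_id2_id2 C.cmp_idn_right D.cmp_idn_right c(1,2) d(1,2)
    by (simp add: sim_cmp_Rarr)
qed

lemma Lfun_Rfun_eq_id: "lfun_eq P (lcomp P L R) (lid P)"
  unfolding lfun_eq_def using Lfun_Rfun_arr Lfun_Rfun_cell Lfun_Rfun_unit Lfun_Rfun_comp by simp

section \<open>The unit eta\<close>

lemma eta_cell:
  assumes "f \<in> Ar S"
  shows "eta C D f \<in> Cl S \<and> src2 S (eta C D f) = far (lid S) f \<and> tgt2 S (eta C D f) = far (lcomp S R L) f"
proof -
  have f: "f \<in> sim_arr C D" using assms by simp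
  then have "pcomp C (a_p f) \<in> Ar C" "pcomp D (a_q f) \<in> Ar D"
    using sim_arrD C.pcomp_arr D.pcomp_arr by blast+
  then show ?thesis
    using sim_cell_into_Rarr[OF f, of "id2 C (pcomp C (a_p f))" "id2 D (pcomp D (a_q f))"] C.id2_cell D.id2_cell
    by (simp add: eta_def)
qed

lemma eta_natural:
  assumes "a \<in> Cl S"
  shows "vc S (fcl (lcomp S R L) a) (eta C D (src2 S a)) = vc S (eta C D (tgt2 S a)) (fcl (lid S) a)"
proof -
  note Sa = sim_cellD[of a C D]
  let ?g = "hseg C (c_al a) (fst (a_p (c_tgt a))) 0 (a_n (c_tgt a))"
    and ?d = "hseg D (c_be a) (fst (a_q (c_tgt a))) 0 (a_m (c_tgt a))"
  have g: "?g \<in> Cl C" "src2 C ?g = pcomp C (a_p (c_src a))" "tgt2 C ?g = pcomp C (a_p (c_tgt a))"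
    and d: "?d \<in> Cl D" "src2 D ?d = pcomp D (a_q (c_src a))" "tgt2 D ?d = pcomp D (a_q (c_tgt a))"
    using C.icon_path_hseg(3-5)[of "a_n (c_src a)" "a_p (c_src a)" "a_n (c_tgt a)" "a_p (c_tgt a)" "c_xi a" "c_al a"]
      D.icon_path_hseg(3-5)[of "a_m (c_src a)" "a_q (c_src a)" "a_m (c_tgt a)" "a_q (c_tgt a)" "c_rho a" "c_be a"]
      Sa assms
    by simp_all
  have "c_xi a ! 0 = 0" "c_xi a ! a_n (c_tgt a) = a_n (c_src a)"
    "c_rho a ! 0 = 0" "c_rho a ! a_m (c_tgt a) = a_m (c_src a)"
    using Sa assms by (auto simp: is_dmap_def)
  then show ?thesis
    using g d Sa assms C.pcomp_arr[of "a_n (c_src a)" "a_p (c_src a)"] D.pcomp_arr[of "a_m (c_src a)" "a_q (c_src a)"]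
      C.vc_id2_right[OF g(1)] C.vc_id2_left[OF g(1)] D.vc_id2_right[OF d(1)] D.vc_id2_left[OF d(1)]
      C.hc_id2_id2_idn D.hc_id2_id2_idn
    by (simp add: sim_vc_def eta_def pobj_def)
qed

lemma eta_unit:
  assumes "x \<in> Ob S"
  shows "vc S (eta C D (idn S x)) (funit (lid S) x) = funit (lcomp S R L) x"
proof -
  obtain y z where x: "x = (y, z)" "y \<in> Ob C" "z \<in> Ob D" using assms by auto
  then show ?thesis
    using C.idn_arr D.idn_arr C.id2_cell D.id2_cell C.hc_id2_id2_idn D.hc_id2_id2_idn
      C.vc_id2_id2 D.vc_id2_id2
    by (simp add: sim_vc_def eta_def sim_id2_def sim_idn_def)
qed

lemma eta_comp:
  assumes f: "f \<in> Ar S" and g: "g \<in> Ar S" and fg: "cod1 S f = dom1 S g"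
  shows "vc S (eta C D (cmp S g f)) (fcomp (lid S) g f)
       = vc S (fcomp (lcomp S R L) g f) (hc S (eta C D g) (eta C D f))"
proof -
  note F = sim_arrD[of f C D] and G = sim_arrD[of g C D]
  have o: "fst (a_p g) = pobj C (a_p f) (a_n f)" "fst (a_q g) = pobj D (a_q f) (a_m f)"
    using sim_cod_eq_dom fg by simp_all
  note PF = C.pcomp_arr[of "a_n f" "a_p f"] D.pcomp_arr[of "a_m f" "a_q f"]
    and PG = C.pcomp_arr[of "a_n g" "a_p g"] D.pcomp_arr[of "a_m g" "a_q g"]
  let ?c = "cmp C (pcomp C (a_p g)) (pcomp C (a_p f))" and ?d = "cmp D (pcomp D (a_q g)) (pcomp D (a_q f))"
  have c: "?c \<in> Ar C" "dom1 C ?c = fst (a_p f)" and d: "?d \<in> Ar D" "dom1 D ?d = fst (a_q f)"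
    using C.cmp_arr D.cmp_arr PF PG F G f g o by auto
  have dom: "dom1 C (pcomp C (a_p f)) = fst (a_p f)" "dom1 D (pcomp D (a_q f)) = fst (a_q f)"
    using PF F f by simp_all
  have "far L (cmp S g f) = (?c, ?d)" using Lfun_sim_cmp f g fg by simp
  moreover have "hseg C (map (id2 C) (snd (a_p f) @ snd (a_p g))) (fst (a_p f)) 0 (a_n f + a_n g) = id2 C ?c"
    "hseg D (map (id2 D) (snd (a_q f) @ snd (a_q g))) (fst (a_q f)) 0 (a_m f + a_m g) = id2 D ?d"
    using C.hseg_id2_pcomp_append D.hseg_id2_pcomp_append F G f g o by simp_all
  moreover have "hc C (id2 C (pcomp C (a_p g))) (hc C (id2 C (pcomp C (a_p f))) (id2 C (idn C (fst (a_p f))))) = id2 C ?c"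
    "hc D (id2 D (pcomp D (a_q g))) (hc D (id2 D (pcomp D (a_q f))) (id2 D (idn D (fst (a_q f))))) = id2 D ?d"
    using C.hc_id2_id2_idn D.hc_id2_id2_idn C.hc_id2 D.hc_id2 PF PG F G f g o by simp_all
  moreover have "[0..<Suc (a_n f + a_n g)] ! (a_n f + a_n g) = a_n f + a_n g"
    "[0..<Suc (a_m f + a_m g)] ! (a_m f + a_m g) = a_m f + a_m g"
    by (simp_all del: upt_Suc)
  ultimately show ?thesis
    using c d dom C.id2_cell D.id2_cell C.hc_id2_id2_idn D.hc_id2_id2_idn C.vc_id2_id2 D.vc_id2_id2
    by (simp add: sim_vc_def eta_def sim_id2_def sim_hc_def sim_cmp_Rarr numeral_2_eq_2 del: upt_Suc)
qed

lemma icon_eta: "icon S S (lid S) (lcomp S R L) (eta C D)"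
  unfolding icon_def using eta_cell eta_natural eta_unit eta_comp by simp

lemma Lfun_eta: "f \<in> Ar S \<Longrightarrow> fcl L (eta C D f) = id2 P (far L f)"
  using sim_arrD[of f C D] C.pcomp_arr[of "a_n f" "a_p f"] D.pcomp_arr[of "a_m f" "a_q f"]
    C.hc_id2_id2_idn D.hc_id2_id2_idn
  by (simp add: eta_def)

lemma eta_Rfun: "g \<in> Ar P \<Longrightarrow> eta C D (far R g) = id2 S (far R g)"
  using C.cmp_idn_right D.cmp_idn_right by (cases g) (simp add: eta_def sim_id2_def)

end

theorem mainTheorem12:
  fixes C :: "('o1,'a1,'b1) tcat" and D :: "('o2,'a2,'b2) tcat"
  assumes "twocat C" and "twocat D"
  shows "strict_functor (simcat C D) (prodcat C D) (Lfun C D)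
       \<and> lax_functor (prodcat C D) (simcat C D) (Rfun C D)
       \<and> lfun_eq (prodcat C D) (lcomp (prodcat C D) (Lfun C D) (Rfun C D)) (lid (prodcat C D))
       \<and> icon (simcat C D) (simcat C D) (lid (simcat C D))
              (lcomp (simcat C D) (Rfun C D) (Lfun C D)) (eta C D)
       \<and> (\<forall>f\<in>Ar (simcat C D). fcl (Lfun C D) (eta C D f) = id2 (prodcat C D) (far (Lfun C D) f))
       \<and> (\<forall>g\<in>Ar (prodcat C D). eta C D (far (Rfun C D) g) = id2 (simcat C D) (far (Rfun C D) g))"
proof -
  interpret two_category_pair C D
    using assms by (simp add: two_category_pair_def two_category_def)
  show ?thesis
    using strict_functor_Lfun lax_functor_Rfun Lfun_Rfun_eq_id icon_eta Lfun_eta eta_Rfun by blast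
qed

end
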